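(* Assume the Setting and Constants below and that $(L_g,L_c)$ satisfies $(S_2)$. Then $\Theta$ is well defined on $\Gamma_0$ (i.e. $A_c+r$ is globally invertible for every $(r,k_u,k_s)\in\Gamma_0$). Furthermore $\Gamma_0$ is nonempty, invariant under $\Theta$ (i.e. $\Theta(\Gamma_0)\subseteq\Gamma_0$), and closed.
   Context: Notation. $C^k_b(Y,Z)$ is the Banach space of $C^k$ maps $f:Y\to Z$ between Banach spaces with $\|f\|_k:=\max_{0\le j\le k}\sup_y\|D^jf(y)\|<\infty$ (operator norms). Setting. Let $n\ge2$ be an integer and $X$ a Banach space with $X=X_c\oplus X_u\oplus X_s$ for closed subspaces, whose norm satisfies $\|x\|=\max\{\|x_c\|,\|x_u\|,\|x_s\|\}$. Let $A$ be a bounded linear operator on $X$ leaving $X_c,X_u,X_s$ invariant, with restrictions $A_c,A_u,A_s$; $A_c,A_u$ invertible, and $\|A_c^{-1}\|^{\tilde n}\|A_s\|<1$, $\|A_u^{-1}\|\|A_c\|^{\tilde n}<1$ for $1\le\tilde n\le n$. Let $L_g,L_c\ge0$, $F=A+g$ with $g\in C^n_b(X,X)$, $g(0)=0$, $Dg(0)=0$, $\|Dg\|_0\le L_g$, $g=(g_c,g_u,g_s)$ its components; $k_c\in C^n_b(X_c,X_c)$ with $k_c(0)=0$, $Dk_c(0)=0$, $\|Dk_c\|_0\le L_c$. For $k_u:X_c\to X_u$, $k_s:X_c\to X_s$ put $K(x):=(x+k_c(x))+k_u(x)+k_s(x)$. Constants. $L_r:=\frac{L_g+L_c(2\|A_c\|+L_g)}{1-L_c}$,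 $L_t:=\frac{\|A_c^{-1}\|^2L_r}{1-\|A_c^{-1}\|L_r}$, $L_u:=\frac{\|A_u^{-1}\|(1+L_c)L_g}{1-L_r\|A_u^{-1}\|-\|A_c\|\|A_u^{-1}\|}$, $L_s:=\frac{\|A_c^{-1}\|(1+L_c)L_g}{1-L_r\|A_c^{-1}\|-\|A_s\|\|A_c^{-1}\|}$, $L_{-1}:=\|A_c^{-1}\|+L_t$; $\theta_{\tilde n,1}:=L_g+L_c$, $\theta_{\tilde n,2}:=\|A_u^{-1}\|((\|A_c\|+L_r)^{\tilde n}+L_g+L_u)$, $\theta_{\tilde n,3}:=L_{-1}^{\tilde n}(\|A_s\|(1+L_{-1}L_s)+L_g(1+L_{-1}(1+L_c)))$. $(S_N)$ means: $L_c<1$, $L_r\|A_c^{-1}\|<1$, $L_r\|A_u^{-1}\|+\|A_c\|\|A_u^{-1}\|<1$, $L_r\|A_c^{-1}\|+\|A_s\|\|A_c^{-1}\|<1$, and $\theta_{\tilde n,i}<1$ for $i=1,2,3$, $0\le\tilde n\le N$. Operator and set. $\Gamma_0$ is the set of $\Lambda=(r,k_u,k_s)\in C^1_b(X_c,X)$ (with $r,k_u,k_s$ the components in $X_c,X_u,X_s$) such that $\Lambda(0)=0$, $D\Lambda(0)=0$, $\|Dr\|_0\le L_r$, $\|Dk_u\|_0\le L_u$, $\|Dk_s\|_0\le L_s$; it is regarded as a subset of the Banach space $C^1_b(X_c,X)$. For a triple with $A_c+r$ a bijection, $\Theta(r,k_u,k_s):=\big(A_ck_c+g_c\circ K-k_c\circ(A_c+r),\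 A_u^{-1}k_u\circ(A_c+r)-A_u^{-1}g_u\circ K,\ A_sk_s\circ(A_c+r)^{-1}+g_s\circ K\circ(A_c+r)^{-1}\big)$. *)

theory Defs
  imports "HOL-Analysis.Analysis"
begin

section \<open>The space X = X_c (+) X_u (+) X_s with the max norm\<close>

datatype ('c, 'u, 's) dsum = DS (pc: 'c) (pu: 'u) (ps: 's)

instantiation dsum :: (ab_group_add, ab_group_add, ab_group_add) ab_group_add
begin
definition "0 = DS 0 0 0"
definition "x + y = DS (pc x + pc y) (pu x + pu y) (ps x + ps y)"
definition "x - y = DS (pc x - pc y) (pu x - pu y) (ps x - ps y)"
definition "- x = DS (- pc x) (- pu x) (- ps x)"
instance
  by standard (auto simp: zero_dsum_def plus_dsum_def minus_dsum_def uminus_dsum_def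
      algebra_simps intro: dsum.expand)
end

lemma dsum_zero_sel[simp]: "pc 0 = 0" "pu 0 = 0" "ps 0 = 0"
  by (simp_all add: zero_dsum_def)
lemma dsum_plus_sel[simp]: "pc (x + y) = pc x + pc y" "pu (x + y) = pu x + pu y" "ps (x + y) = ps x + ps y"
  by (simp_all add: plus_dsum_def)
lemma dsum_minus_sel[simp]: "pc (x - y) = pc x - pc y" "pu (x - y) = pu x - pu y" "ps (x - y) = ps x - ps y"
  by (simp_all add: minus_dsum_def)
lemma dsum_uminus_sel[simp]: "pc (- x) = - pc x" "pu (- x) = - pu x" "ps (- x) = - ps x"
  by (simp_all add: uminus_dsum_def)

instantiation dsum :: (real_vector, real_vector, real_vector) real_vector
begin
definition "scaleR a x = DS (a *\<^sub>R pc x) (a *\<^sub>R pu x) (a *\<^sub>R ps x)"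
instance
  by standard (auto simp: scaleR_dsum_def algebra_simps intro: dsum.expand)
end

lemma dsum_scaleR_sel[simp]: "pc (a *\<^sub>R x) = a *\<^sub>R pc x" "pu (a *\<^sub>R x) = a *\<^sub>R pu x"
  "ps (a *\<^sub>R x) = a *\<^sub>R ps x"
  by (simp_all add: scaleR_dsum_def)

instantiation dsum :: (real_normed_vector, real_normed_vector, real_normed_vector) real_normed_vector
begin
definition norm_dsum_def: "norm x = max (norm (pc x)) (max (norm (pu x)) (norm (ps x)))"
definition sgn_dsum_def: "sgn (x :: ('a,'b,'c) dsum) = x /\<^sub>R norm x"
definition dist_dsum_def: "dist (x :: ('a,'b,'c) dsum) y = norm (x - y)"
definition uniformity_dsum_def:
  "(uniformity :: (('a,'b,'c) dsum \<times> ('a,'b,'c) dsum) filter) = (INF e\<in>{0 <..}. principal {(x, y). dist x y < e})"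
definition open_dsum_def:
  "open (U :: ('a,'b,'c) dsum set) \<longleftrightarrow> (\<forall>x\<in>U. \<forall>\<^sub>F (x', y) in uniformity. x' = x \<longrightarrow> y \<in> U)"
instance
proof
  fix x y :: "('a,'b,'c) dsum" and a :: real
  show "norm (x + y) \<le> norm x + norm y"
    unfolding norm_dsum_def using norm_triangle_ineq[of "pc x" "pc y"]
      norm_triangle_ineq[of "pu x" "pu y"] norm_triangle_ineq[of "ps x" "ps y"]
    by (simp add: max_def)
  show "norm (a *\<^sub>R x) = \<bar>a\<bar> * norm x"
    unfolding norm_dsum_def by (simp add: max_mult_distrib_left)
  show "(norm x = 0) = (x = 0)"
    unfolding norm_dsum_def zero_dsum_def
    by (cases x) (auto simp: max_def)
qed (simp_all add: sgn_dsum_def dist_dsum_def uniformity_dsum_def open_dsum_def)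
end

lemma norm_pc_le: "norm (pc x) \<le> norm x" and norm_pu_le: "norm (pu x) \<le> norm x"
  and norm_ps_le: "norm (ps x) \<le> norm x"
  by (simp_all add: norm_dsum_def)

instance dsum :: (banach, banach, banach) banach
proof
  fix X :: "nat \<Rightarrow> ('a,'b,'c) dsum"
  assume C: "Cauchy X"
  have Cc: "Cauchy (\<lambda>n. pc (X n))" "Cauchy (\<lambda>n. pu (X n))" "Cauchy (\<lambda>n. ps (X n))"
    using C unfolding Cauchy_def dist_norm
    by (metis (no_types, lifting) dsum_minus_sel le_less_trans norm_pc_le norm_pu_le norm_ps_le)+
  then obtain a b c where ab: "(\<lambda>n. pc (X n)) \<longlonglongrightarrow> a" "(\<lambda>n. pu (X n)) \<longlonglongrightarrow> b"
    "(\<lambda>n. ps (X n)) \<longlonglongrightarrow> c"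
    by (meson Cauchy_convergent_iff convergent_def)
  have "X \<longlonglongrightarrow> DS a b c"
  proof (rule LIMSEQ_I)
    fix r :: real assume "0 < r"
    from ab obtain N1 N2 N3 where
      "\<forall>n\<ge>N1. norm (pc (X n) - a) < r" "\<forall>n\<ge>N2. norm (pu (X n) - b) < r"
      "\<forall>n\<ge>N3. norm (ps (X n) - c) < r"
      using \<open>0 < r\<close> by (meson LIMSEQ_D)
    then show "\<exists>no. \<forall>n\<ge>no. norm (X n - DS a b c) < r"
      by (intro exI[of _ "max N1 (max N2 N3)"]) (auto simp: norm_dsum_def)
  qed
  then show "convergent X" by (auto simp: convergent_def)
qed


section \<open>Bounded C^k maps: C^k_b(Y,Z)\<close>

text \<open>The j-th derivative D^j f(y) is represented as a function on lists of length j
  (a bounded j-multilinear map); its operator norm is the multilinear operator norm.\<close>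

definition mlnorm :: "nat \<Rightarrow> ('a::real_normed_vector list \<Rightarrow> 'b::real_normed_vector) \<Rightarrow> real" where
  "mlnorm j M = Sup {norm (M hs) | hs. length hs = j \<and> (\<forall>h\<in>set hs. norm h \<le> 1)}"

definition bounded_multilinear ::
  "nat \<Rightarrow> ('a::real_normed_vector list \<Rightarrow> 'b::real_normed_vector) \<Rightarrow> bool" where
  "bounded_multilinear j M \<longleftrightarrow>
     (\<forall>hs i. length hs = j \<and> i < j \<longrightarrow> linear (\<lambda>h. M (hs[i := h]))) \<and>
     (\<exists>B. \<forall>hs. length hs = j \<longrightarrow> norm (M hs) \<le> B * prod_list (map norm hs))"

text \<open>D is a witness that f is C^k with bounded derivatives up to order k:
  D j y is D^j f(y); D^(j+1) f is the Frechet derivative of D^j f w.r.t. the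
  multilinear operator norm; D^k f is continuous; all sup-norms are finite.\<close>

definition Ckb_wit :: "nat \<Rightarrow> ('a::real_normed_vector \<Rightarrow> 'b::real_normed_vector)
    \<Rightarrow> (nat \<Rightarrow> 'a \<Rightarrow> 'a list \<Rightarrow> 'b) \<Rightarrow> bool" where
  "Ckb_wit k f D \<longleftrightarrow>
     (\<forall>x. D 0 x [] = f x) \<and>
     (\<forall>j\<le>k. \<forall>x. bounded_multilinear j (D j x)) \<and>
     (\<forall>j<k. \<forall>x. \<forall>e>0. \<exists>d>0. \<forall>h. norm h < d \<longrightarrow>
        mlnorm j (\<lambda>hs. D j (x + h) hs - D j x hs - D (Suc j) x (h # hs)) \<le> e * norm h) \<and>
     (\<forall>x. \<forall>e>0. \<exists>d>0. \<forall>y. norm (y - x) < d \<longrightarrow> mlnorm k (\<lambda>hs. D k y hs - D k x hs) < e) \<and>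
     (\<forall>j\<le>k. bdd_above (range (\<lambda>y. mlnorm j (D j y))))"

definition Ckb :: "nat \<Rightarrow> ('a::real_normed_vector \<Rightarrow> 'b::real_normed_vector) \<Rightarrow> bool" where
  "Ckb k f \<longleftrightarrow> (\<exists>D. Ckb_wit k f D)"

text \<open>The derivatives (unique on the relevant lists of length j).\<close>
definition Dw :: "nat \<Rightarrow> ('a::real_normed_vector \<Rightarrow> 'b::real_normed_vector)
    \<Rightarrow> nat \<Rightarrow> 'a \<Rightarrow> 'a list \<Rightarrow> 'b" where
  "Dw k f = (SOME D. Ckb_wit k f D)"

definition Ckb_norm :: "nat \<Rightarrow> ('a::real_normed_vector \<Rightarrow> 'b::real_normed_vector) \<Rightarrow> real" where
  "Ckb_norm k f = Max ((\<lambda>j. SUP y. mlnorm j (Dw k f j y)) ` {..k})"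

definition Dsup :: "('a::real_normed_vector \<Rightarrow> 'b::real_normed_vector) \<Rightarrow> real" where
  "Dsup f = (SUP y. mlnorm 1 (Dw 1 f 1 y))"

definition D_zero_at0 :: "('a::real_normed_vector \<Rightarrow> 'b::real_normed_vector) \<Rightarrow> bool" where
  "D_zero_at0 f \<longleftrightarrow> (\<forall>h. Dw 1 f 1 0 [h] = 0)"

text \<open>Closedness of a subset of the Banach space C^1_b(Y,Z) (sequential characterisation
  in the metric induced by ||.||_1).\<close>
definition C1b_closed :: "('a::real_normed_vector \<Rightarrow> 'b::real_normed_vector) set \<Rightarrow> bool" where
  "C1b_closed S \<longleftrightarrow>
     (\<forall>F \<Lambda>. (\<forall>m. F m \<in> S) \<and> Ckb 1 \<Lambda> \<and> (\<lambda>m. Ckb_norm 1 (\<lambda>x. F m x - \<Lambda> x)) \<longlonglongrightarrow> 0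
        \<longrightarrow> \<Lambda> \<in> S)"

text \<open>Arguments: nAc = ||A_c||, nAci = ||A_c^{-1}||, nAui = ||A_u^{-1}||, nAs = ||A_s||.\<close>

definition L_r :: "real \<Rightarrow> real \<Rightarrow> real \<Rightarrow> real" where
  "L_r nAc Lg Lc = (Lg + Lc * (2 * nAc + Lg)) / (1 - Lc)"

definition L_t :: "real \<Rightarrow> real \<Rightarrow> real \<Rightarrow> real \<Rightarrow> real" where
  "L_t nAc nAci Lg Lc = nAci^2 * L_r nAc Lg Lc / (1 - nAci * L_r nAc Lg Lc)"

definition L_u :: "real \<Rightarrow> real \<Rightarrow> real \<Rightarrow> real \<Rightarrow> real" where
  "L_u nAc nAui Lg Lc = nAui * (1 + Lc) * Lg / (1 - L_r nAc Lg Lc * nAui - nAc * nAui)"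

definition L_s :: "real \<Rightarrow> real \<Rightarrow> real \<Rightarrow> real \<Rightarrow> real \<Rightarrow> real" where
  "L_s nAc nAci nAs Lg Lc = nAci * (1 + Lc) * Lg / (1 - L_r nAc Lg Lc * nAci - nAs * nAci)"

definition L_m1 :: "real \<Rightarrow> real \<Rightarrow> real \<Rightarrow> real \<Rightarrow> real" where
  "L_m1 nAc nAci Lg Lc = nAci + L_t nAc nAci Lg Lc"

definition theta1 :: "nat \<Rightarrow> real \<Rightarrow> real \<Rightarrow> real" where
  "theta1 m Lg Lc = Lg + Lc"

definition theta2 :: "nat \<Rightarrow> real \<Rightarrow> real \<Rightarrow> real \<Rightarrow> real \<Rightarrow> real" where
  "theta2 m nAc nAui Lg Lc = nAui * ((nAc + L_r nAc Lg Lc)^m + Lg + L_u nAc nAui Lg Lc)"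

definition theta3 :: "nat \<Rightarrow> real \<Rightarrow> real \<Rightarrow> real \<Rightarrow> real \<Rightarrow> real \<Rightarrow> real" where
  "theta3 m nAc nAci nAs Lg Lc =
     L_m1 nAc nAci Lg Lc ^ m * (nAs * (1 + L_m1 nAc nAci Lg Lc * L_s nAc nAci nAs Lg Lc)
       + Lg * (1 + L_m1 nAc nAci Lg Lc * (1 + Lc)))"

definition S_cond :: "nat \<Rightarrow> real \<Rightarrow> real \<Rightarrow> real \<Rightarrow> real \<Rightarrow> real \<Rightarrow> real \<Rightarrow> bool" where
  "S_cond N nAc nAci nAui nAs Lg Lc \<longleftrightarrow>
     Lc < 1 \<and> L_r nAc Lg Lc * nAci < 1 \<and>
     L_r nAc Lg Lc * nAui + nAc * nAui < 1 \<and>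
     L_r nAc Lg Lc * nAci + nAs * nAci < 1 \<and>
     (\<forall>m\<le>N. theta1 m Lg Lc < 1 \<and> theta2 m nAc nAui Lg Lc < 1 \<and>
              theta3 m nAc nAci nAs Lg Lc < 1)"

definition Gamma0 :: "real \<Rightarrow> real \<Rightarrow> real \<Rightarrow> ('c::real_normed_vector \<Rightarrow>
     ('c, 'u::real_normed_vector, 's::real_normed_vector) dsum) set" where
  "Gamma0 Lr Lu Ls = {\<Lambda>. Ckb 1 \<Lambda> \<and> \<Lambda> 0 = 0 \<and> D_zero_at0 \<Lambda> \<and>
      Dsup (\<lambda>x. pc (\<Lambda> x)) \<le> Lr \<and> Dsup (\<lambda>x. pu (\<Lambda> x)) \<le> Lu \<and> Dsup (\<lambda>x. ps (\<Lambda> x)) \<le> Ls}"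

definition Kmap :: "('c::real_vector \<Rightarrow> 'c) \<Rightarrow> ('c \<Rightarrow> 'u) \<Rightarrow> ('c \<Rightarrow> 's) \<Rightarrow> 'c \<Rightarrow> ('c, 'u, 's) dsum" where
  "Kmap kc ku ks x = DS (x + kc x) (ku x) (ks x)"

definition Theta :: "('c::real_vector \<Rightarrow> 'c) \<Rightarrow> ('u::real_vector \<Rightarrow> 'u) \<Rightarrow> ('s::real_vector \<Rightarrow> 's)
     \<Rightarrow> (('c, 'u, 's) dsum \<Rightarrow> ('c, 'u, 's) dsum) \<Rightarrow> ('c \<Rightarrow> 'c)
     \<Rightarrow> ('c \<Rightarrow> ('c, 'u, 's) dsum) \<Rightarrow> ('c \<Rightarrow> ('c, 'u, 's) dsum)" where
  "Theta Ac Aui As g kc \<Lambda> =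
     (let r = (\<lambda>x. pc (\<Lambda> x)); ku = (\<lambda>x. pu (\<Lambda> x)); ks = (\<lambda>x. ps (\<Lambda> x));
          K = Kmap kc ku ks; \<Phi> = (\<lambda>x. Ac x + r x); \<Phi>i = inv \<Phi>
      in (\<lambda>x. DS (Ac (kc x) + pc (g (K x)) - kc (\<Phi> x))
                 (Aui (ku (\<Phi> x)) - Aui (pu (g (K x))))
                 (As (ks (\<Phi>i x)) + ps (g (K (\<Phi>i x))))))"


definition Gamma0_of :: "('c::banach \<Rightarrow>\<^sub>L 'c) \<Rightarrow> ('c \<Rightarrow>\<^sub>L 'c) \<Rightarrow> ('u::banach \<Rightarrow>\<^sub>L 'u)
     \<Rightarrow> ('s::banach \<Rightarrow>\<^sub>L 's) \<Rightarrow> real \<Rightarrow> real \<Rightarrow> ('c \<Rightarrow> ('c, 'u, 's) dsum) set" where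
  "Gamma0_of Ac Aci Aui As Lg Lc =
     Gamma0 (L_r (norm Ac) Lg Lc) (L_u (norm Ac) (norm Aui) Lg Lc)
            (L_s (norm Ac) (norm Aci) (norm As) Lg Lc)"

end

theory Submission
  imports Defs
begin

text \<open>Write \<open>\<Lambda> = (r, k\<^sub>u, k\<^sub>s)\<close>. Since \<open>r\<close> is \<open>L\<^sub>r\<close>-Lipschitz and \<open>\<parallel>A\<^sub>c\<^sup>-\<^sup>1\<parallel> L\<^sub>r < 1\<close>,
  solving \<open>A\<^sub>c x + r x = z\<close> is a contraction problem, so \<open>\<Phi> = A\<^sub>c + r\<close> is a bijection; its inverse
  is \<open>C\<^sup>1\<close> with derivative \<open>(A\<^sub>c + Dr)\<^sup>-\<^sup>1\<close>, of norm at most \<open>\<parallel>A\<^sub>c\<^sup>-\<^sup>1\<parallel> / (1 - \<parallel>A\<^sub>c\<^sup>-\<^sup>1\<parallel> L\<^sub>r)\<close>.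
  The chain rule then bounds the derivatives of the three components of \<open>\<Theta>(\<Lambda>)\<close> by affine
  expressions in \<open>L\<^sub>r, L\<^sub>u, L\<^sub>s\<close> whose fixed points are exactly these constants; the conditions
  on \<open>\<theta>\<^sub>1\<^sub>,\<^sub>2\<close> and \<open>\<theta>\<^sub>1\<^sub>,\<^sub>3\<close> give \<open>L\<^sub>u, L\<^sub>s \<le> 1 + L\<^sub>c\<close>, which bounds \<open>DK\<close> by \<open>1 + L\<^sub>c\<close>.
  Closedness holds because convergence in \<open>C\<^sup>1\<^sub>b\<close> gives pointwise convergence of values and
  derivatives, under which all conditions defining \<open>\<Gamma>\<^sub>0\<close> persist.\<close>

section \<open>Bounded \<open>C\<^sup>1\<close> maps with operator-valued derivatives\<close>

definition has_bounded_C1_derivative ::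
    "('a::real_normed_vector \<Rightarrow> 'b::real_normed_vector) \<Rightarrow> ('a \<Rightarrow> 'a \<Rightarrow>\<^sub>L 'b) \<Rightarrow> bool" where
  "has_bounded_C1_derivative f f' \<longleftrightarrow>
     (\<forall>x. (f has_derivative blinfun_apply (f' x)) (at x)) \<and> continuous_on UNIV f' \<and> bounded (range f')"

definition C1b_deriv ::
    "('a::real_normed_vector \<Rightarrow> 'b::real_normed_vector) \<Rightarrow> ('a \<Rightarrow> 'a \<Rightarrow>\<^sub>L 'b) \<Rightarrow> bool" where
  "C1b_deriv f f' \<longleftrightarrow> has_bounded_C1_derivative f f' \<and> bounded (range f)"

lemma has_bounded_C1_derivative_continuous_on:
  "has_bounded_C1_derivative f f' \<Longrightarrow> continuous_on UNIV f"
  unfolding has_bounded_C1_derivative_def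
  by (meson continuous_at_imp_continuous_on has_derivative_continuous)

lemma has_bounded_C1_derivative_add:
  "has_bounded_C1_derivative f f' \<Longrightarrow> has_bounded_C1_derivative g g' \<Longrightarrow>
    has_bounded_C1_derivative (\<lambda>x. f x + g x) (\<lambda>x. f' x + g' x)"
  unfolding has_bounded_C1_derivative_def
  by (auto intro!: derivative_eq_intros continuous_intros bounded_plus_comp simp: blinfun.add_left)

lemma has_bounded_C1_derivative_diff:
  "has_bounded_C1_derivative f f' \<Longrightarrow> has_bounded_C1_derivative g g' \<Longrightarrow>
    has_bounded_C1_derivative (\<lambda>x. f x - g x) (\<lambda>x. f' x - g' x)"
  unfolding has_bounded_C1_derivative_def
  by (auto intro!: derivative_eq_intros continuous_intros bounded_minus_comp simp: blinfun.diff_left)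

lemma has_bounded_C1_derivative_compose:
  assumes f: "has_bounded_C1_derivative f f'" and g: "has_bounded_C1_derivative g g'"
  shows "has_bounded_C1_derivative (\<lambda>x. g (f x)) (\<lambda>x. g' (f x) o\<^sub>L f' x)"
proof -
  have df: "(f has_derivative blinfun_apply (f' x)) (at x)" for x
    using f unfolding has_bounded_C1_derivative_def by auto
  have dg: "(g has_derivative blinfun_apply (g' y)) (at y)" for y
    using g unfolding has_bounded_C1_derivative_def by auto
  obtain B1 B2 where B1: "\<And>x. norm (f' x) \<le> B1" and B2: "\<And>x. norm (g' x) \<le> B2"
    using f g unfolding has_bounded_C1_derivative_def bounded_iff by auto
  have "((\<lambda>x. g (f x)) has_derivative blinfun_apply (g' (f x) o\<^sub>L f' x)) (at x)" for x
    using diff_chain_at[OF df dg] by (simp add: o_def blinfun_compose.rep_eq)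
  moreover have "continuous_on UNIV (\<lambda>x. g' (f x) o\<^sub>L f' x)"
  proof -
    have "continuous_on UNIV g'"
      using g unfolding has_bounded_C1_derivative_def by blast
    then have "continuous_on UNIV (g' \<circ> f)"
      by (intro continuous_on_compose has_bounded_C1_derivative_continuous_on[OF f])
        (rule continuous_on_subset[OF _ subset_UNIV])
    then have "continuous_on UNIV (\<lambda>x. g' (f x))"
      by (simp add: o_def)
    then show ?thesis
      using f unfolding has_bounded_C1_derivative_def by (auto intro!: continuous_intros)
  qed
  moreover have "norm (g' (f x) o\<^sub>L f' x) \<le> B2 * B1" for x
  proof -
    have "0 \<le> B2"
      using B2[of "f x"] norm_ge_zero[of "g' (f x)"] by linarith
    then show ?thesis
      by (intro order_trans[OF norm_blinfun_compose] mult_mono B1 B2 norm_ge_zero)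
  qed
  ultimately show ?thesis
    unfolding has_bounded_C1_derivative_def bounded_iff by (auto intro!: exI[of _ "B2 * B1"])
qed

lemma has_bounded_C1_derivative_ident: "has_bounded_C1_derivative (\<lambda>x. x) (\<lambda>_. id_blinfun)"
  unfolding has_bounded_C1_derivative_def by (auto intro: derivative_eq_intros)

lemma has_bounded_C1_derivative_blinfun: "has_bounded_C1_derivative (blinfun_apply T) (\<lambda>_. T)"
  unfolding has_bounded_C1_derivative_def
  by (auto intro: bounded_linear.has_derivative[OF blinfun.bounded_linear_right])

lemma has_bounded_C1_derivative_blinfun_apply:
  "has_bounded_C1_derivative f f' \<Longrightarrow>
    has_bounded_C1_derivative (\<lambda>x. blinfun_apply T (f x)) (\<lambda>x. T o\<^sub>L f' x)"
  using has_bounded_C1_derivative_compose[OF _ has_bounded_C1_derivative_blinfun, of f f' T] by simp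

lemma has_bounded_C1_derivative_lipschitz:
  assumes "has_bounded_C1_derivative f f'" and "\<And>x. norm (f' x) \<le> L"
  shows "norm (f x - f y) \<le> L * norm (x - y)"
  using assms unfolding has_bounded_C1_derivative_def
  by (intro differentiable_bound[of UNIV f "\<lambda>x. blinfun_apply (f' x)" L x y])
    (auto simp: norm_blinfun.rep_eq[symmetric])

lemma C1b_deriv_blinfun_apply:
  "C1b_deriv f f' \<Longrightarrow> C1b_deriv (\<lambda>x. blinfun_apply T (f x)) (\<lambda>x. T o\<^sub>L f' x)"
  unfolding C1b_deriv_def
  using has_bounded_C1_derivative_blinfun_apply
    bounded_linear_image[OF _ blinfun.bounded_linear_right, of "range f" T]
  by (auto simp: image_image)

lemma C1b_deriv_add:
  "C1b_deriv f f' \<Longrightarrow> C1b_deriv g g' \<Longrightarrow> C1b_deriv (\<lambda>x. f x + g x) (\<lambda>x. f' x + g' x)"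
  unfolding C1b_deriv_def by (auto intro: has_bounded_C1_derivative_add bounded_plus_comp)

lemma C1b_deriv_diff:
  "C1b_deriv f f' \<Longrightarrow> C1b_deriv g g' \<Longrightarrow> C1b_deriv (\<lambda>x. f x - g x) (\<lambda>x. f' x - g' x)"
  unfolding C1b_deriv_def by (auto intro: has_bounded_C1_derivative_diff bounded_minus_comp)

lemma C1b_deriv_compose:
  "has_bounded_C1_derivative f f' \<Longrightarrow> C1b_deriv g g' \<Longrightarrow>
    C1b_deriv (\<lambda>x. g (f x)) (\<lambda>x. g' (f x) o\<^sub>L f' x)"
  unfolding C1b_deriv_def by (auto intro: has_bounded_C1_derivative_compose bounded_subset)

section \<open>The multilinear definition of \<open>C\<^sup>k\<^sub>b\<close>\<close>

lemma mlnorm_0: "mlnorm 0 M = norm (M [])"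
  unfolding mlnorm_def by simp

lemma norm_blinfun_eq_SUP_cball: "norm T = (SUP h\<in>cball 0 1. norm (blinfun_apply T h))"
proof -
  have T_le: "norm (T h) \<le> norm T" if "h \<in> cball 0 1" for h
    using that norm_blinfun[of T h] mult_left_le[of "norm h" "norm T"] by auto
  then have bdd: "bdd_above ((\<lambda>h. norm (T h)) ` cball 0 1)"
    by (intro bdd_aboveI2) auto
  let ?S = "SUP h\<in>cball 0 1. norm (T h)"
  have unit: "norm (T h) \<le> ?S" if "norm h \<le> 1" for h
    using that by (intro cSUP_upper bdd) auto
  show ?thesis
  proof (rule antisym)
    show "?S \<le> norm T"
      using T_le by (intro cSUP_least) auto
    show "norm T \<le> ?S"
    proof (rule norm_blinfun_bound)
      show "0 \<le> ?S"
        using unit[of 0] by simp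
      show "norm (T x) \<le> ?S * norm x" for x
      proof (cases "x = 0")
        case False
        have "T x = norm x *\<^sub>R T (x /\<^sub>R norm x)"
          using False by (simp add: blinfun.scaleR_right)
        then have "norm (T x) = norm x * norm (T (x /\<^sub>R norm x))"
          by (metis norm_scaleR abs_norm_cancel)
        also have "\<dots> \<le> norm x * ?S"
          using False by (intro mult_left_mono unit) auto
        finally show ?thesis
          by (simp only: mult.commute)
      qed simp
    qed
  qed
qed

lemma mlnorm_1_eq_norm:
  assumes M: "\<And>h. M [h] = blinfun_apply T h"
  shows "mlnorm 1 M = norm T"
proof -
  have "{norm (M hs) | hs. length hs = 1 \<and> (\<forall>h\<in>set hs. norm h \<le> 1)}
      = (\<lambda>h. norm (T h)) ` cball 0 1" (is "?A = ?B")
  proof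
    show "?A \<subseteq> ?B"
      by (auto simp: length_Suc_conv M)
    show "?B \<subseteq> ?A"
    proof
      fix y assume "y \<in> ?B"
      then obtain h where "norm h \<le> 1" "y = norm (T h)"
        by auto
      then show "y \<in> ?A"
        by (intro CollectI exI[of _ "[h]"]) (simp add: M)
    qed
  qed
  then show ?thesis
    unfolding mlnorm_def norm_blinfun_eq_SUP_cball[of T] by simp
qed

lemma bounded_multilinear_1_imp_bounded_linear:
  assumes "bounded_multilinear 1 M"
  shows "bounded_linear (\<lambda>h. M [h])"
proof -
  have "\<forall>hs i. length hs = 1 \<and> i < 1 \<longrightarrow> linear (\<lambda>h. M (hs[i := h]))"
    using assms unfolding bounded_multilinear_def by (elim conjE)
  from this[rule_format, of "[0]" 0] have lin: "linear (\<lambda>h. M [h])"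
    by simp
  obtain B where B: "\<And>hs. length hs = 1 \<Longrightarrow> norm (M hs) \<le> B * prod_list (map norm hs)"
    using assms unfolding bounded_multilinear_def by blast
  show ?thesis
  proof (rule bounded_linear_intro[where K=B])
    show "M [x + y] = M [x] + M [y]" for x y
      using linear_add[OF lin] by simp
    show "M [r *\<^sub>R x] = r *\<^sub>R M [x]" for r x
      using linear_scale[OF lin] by simp
    show "norm (M [x]) \<le> norm x * B" for x
      using B[of "[x]"] by (simp add: mult.commute)
  qed
qed

lemma Ckb_witD:
  assumes "Ckb_wit k f D"
  shows Ckb_wit_0: "D 0 x [] = f x"
    and Ckb_wit_multilinear: "j \<le> k \<Longrightarrow> bounded_multilinear j (D j x)"
    and Ckb_wit_derivative: "j < k \<Longrightarrow> e > 0 \<Longrightarrow> \<exists>d>0. \<forall>h. norm h < d \<longrightarrow>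
        mlnorm j (\<lambda>hs. D j (x + h) hs - D j x hs - D (Suc j) x (h # hs)) \<le> e * norm h"
    and Ckb_wit_continuous: "e > 0 \<Longrightarrow>
        \<exists>d>0. \<forall>y. norm (y - x) < d \<longrightarrow> mlnorm k (\<lambda>hs. D k y hs - D k x hs) < e"
    and Ckb_wit_bdd: "j \<le> k \<Longrightarrow> bdd_above (range (\<lambda>y. mlnorm j (D j y)))"
proof -
  note W = assms[unfolded Ckb_wit_def]
  have "\<forall>x. D 0 x [] = f x" using W by (elim conjE)
  then show "D 0 x [] = f x" by blast
  have "\<forall>j\<le>k. \<forall>x. bounded_multilinear j (D j x)" using W by (elim conjE)
  then show "j \<le> k \<Longrightarrow> bounded_multilinear j (D j x)" by blast
  have "\<forall>j<k. \<forall>x. \<forall>e>0. \<exists>d>0. \<forall>h. norm h < d \<longrightarrow>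
      mlnorm j (\<lambda>hs. D j (x + h) hs - D j x hs - D (Suc j) x (h # hs)) \<le> e * norm h"
    using W by (elim conjE)
  then show "j < k \<Longrightarrow> e > 0 \<Longrightarrow> \<exists>d>0. \<forall>h. norm h < d \<longrightarrow>
      mlnorm j (\<lambda>hs. D j (x + h) hs - D j x hs - D (Suc j) x (h # hs)) \<le> e * norm h"
    by blast
  have "\<forall>x. \<forall>e>0. \<exists>d>0. \<forall>y. norm (y - x) < d \<longrightarrow> mlnorm k (\<lambda>hs. D k y hs - D k x hs) < e"
    using W by (elim conjE)
  then show "e > 0 \<Longrightarrow> \<exists>d>0. \<forall>y. norm (y - x) < d \<longrightarrow> mlnorm k (\<lambda>hs. D k y hs - D k x hs) < e"
    by blast
  have "\<forall>j\<le>k. bdd_above (range (\<lambda>y. mlnorm j (D j y)))" using W by (elim conjE)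
  then show "j \<le> k \<Longrightarrow> bdd_above (range (\<lambda>y. mlnorm j (D j y)))" by simp
qed

lemma Ckb_wit_Blinfun_apply:
  assumes "Ckb_wit k f D" and "1 \<le> k"
  shows "blinfun_apply (Blinfun (\<lambda>h. D 1 x [h])) h = D 1 x [h]"
  using Ckb_wit_multilinear[OF assms(1)] assms(2)
  by (simp add: bounded_linear_Blinfun_apply bounded_multilinear_1_imp_bounded_linear)

lemma Ckb_wit_has_derivative:
  assumes W: "Ckb_wit k f D" and "1 \<le> k"
  shows "(f has_derivative blinfun_apply (Blinfun (\<lambda>h. D 1 x [h]))) (at x)"
  unfolding has_derivative_at_alt
proof (intro conjI allI impI)
  fix e :: real assume "0 < e"
  then obtain d where "d > 0" and d: "\<And>h. norm h < d \<Longrightarrow>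
      mlnorm 0 (\<lambda>hs. D 0 (x + h) hs - D 0 x hs - D 1 x (h # hs)) \<le> e * norm h"
    using Ckb_wit_derivative[OF W, of 0 e x] \<open>1 \<le> k\<close> by auto
  then show "\<exists>d>0. \<forall>y. norm (y - x) < d \<longrightarrow>
      norm (f y - f x - blinfun_apply (Blinfun (\<lambda>h. D 1 x [h])) (y - x)) \<le> e * norm (y - x)"
    using d[of "y - x" for y] Ckb_wit_0[OF W] Ckb_wit_Blinfun_apply[OF assms, unfolded One_nat_def]
    by (auto simp: mlnorm_0)
qed (rule blinfun.bounded_linear_right)

lemma Ckb_wit_1_imp_C1b_deriv:
  assumes W: "Ckb_wit 1 f D"
  shows "C1b_deriv f (\<lambda>x. Blinfun (\<lambda>h. D 1 x [h]))"
proof -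
  let ?f' = "\<lambda>x. Blinfun (\<lambda>h. D 1 x [h])"
  note app = Ckb_wit_Blinfun_apply[OF W order_refl, unfolded One_nat_def]
  have diff_norm: "mlnorm 1 (\<lambda>hs. D 1 y hs - D 1 x hs) = norm (?f' y - ?f' x)" for x y
    by (rule mlnorm_1_eq_norm) (simp add: app blinfun.diff_left)
  have cont: "continuous_on UNIV ?f'"
    unfolding continuous_on_iff dist_norm
  proof (intro ballI allI impI)
    fix x and e :: real assume "0 < e"
    then obtain d where "d > 0" "\<forall>y. norm (y - x) < d \<longrightarrow> mlnorm 1 (\<lambda>hs. D 1 y hs - D 1 x hs) < e"
      using Ckb_wit_continuous[OF W] by blast
    then show "\<exists>d>0. \<forall>y\<in>UNIV. norm (y - x) < d \<longrightarrow> norm (?f' y - ?f' x) < e"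
      unfolding diff_norm[symmetric] by blast
  qed
  obtain B0 B1 where "\<And>y. mlnorm 0 (D 0 y) \<le> B0" and B1: "\<And>y. mlnorm 1 (D 1 y) \<le> B1"
    using Ckb_wit_bdd[OF W, of 0] Ckb_wit_bdd[OF W, of 1] by (auto simp: bdd_above_def)
  then have "bounded (range f)"
    unfolding bounded_iff by (auto simp: mlnorm_0 Ckb_wit_0[OF W])
  moreover have "norm (?f' y) = mlnorm 1 (D 1 y)" for y
    by (rule mlnorm_1_eq_norm[symmetric]) (simp add: app)
  then have "bounded (range ?f')"
    unfolding bounded_iff using B1 by auto
  ultimately show ?thesis
    unfolding C1b_deriv_def has_bounded_C1_derivative_def
    using Ckb_wit_has_derivative[OF W order_refl] cont by simp
qed

definition C1b_wit ::
    "('a::real_normed_vector \<Rightarrow> 'b::real_normed_vector) \<Rightarrow> ('a \<Rightarrow> 'a \<Rightarrow>\<^sub>L 'b) \<Rightarrow> nat \<Rightarrow> 'a \<Rightarrow> 'a list \<Rightarrow> 'b"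
  where "C1b_wit f f' j x hs = (if j = 0 then f x else f' x (hd hs))"

lemma bounded_multilinear_C1b_wit:
  assumes "j \<le> 1"
  shows "bounded_multilinear j (C1b_wit f f' j x)"
proof (cases "j = 0")
  case True
  then show ?thesis
    unfolding bounded_multilinear_def by (auto simp: C1b_wit_def intro!: exI[of _ "norm (f x)"])
next
  case False
  with assms have j: "j = 1" by simp
  have "linear (\<lambda>h. C1b_wit f f' 1 x ([a][0 := h]))" for a
    by (simp add: C1b_wit_def blinfun.bounded_linear_right bounded_linear.linear)
  moreover have "norm (C1b_wit f f' 1 x hs) \<le> norm (f' x) * prod_list (map norm hs)"
    if "length hs = 1" for hs
    using that by (auto simp: length_Suc_conv C1b_wit_def norm_blinfun)
  ultimately show ?thesis
    unfolding bounded_multilinear_def j by (auto simp: length_Suc_conv)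
qed

lemma C1b_deriv_imp_Ckb_wit:
  assumes f: "C1b_deriv f f'"
  shows "Ckb_wit 1 f (C1b_wit f f')"
  unfolding Ckb_wit_def
proof (intro conjI allI impI)
  let ?D = "C1b_wit f f'"
  have der: "(f has_derivative blinfun_apply (f' x)) (at x)" for x
    using f unfolding C1b_deriv_def has_bounded_C1_derivative_def by blast
  have cont: "continuous_on UNIV f'"
    using f unfolding C1b_deriv_def has_bounded_C1_derivative_def by blast
  obtain B0 B1 where B0: "\<And>x. norm (f x) \<le> B0" and B1: "\<And>x. norm (f' x) \<le> B1"
    using f unfolding C1b_deriv_def has_bounded_C1_derivative_def bounded_iff by auto
  have norm_D1: "mlnorm 1 (?D 1 y) = norm (f' y)" for y
    by (rule mlnorm_1_eq_norm) (simp add: C1b_wit_def)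
  have norm_D1_diff: "mlnorm 1 (\<lambda>hs. ?D 1 y hs - ?D 1 x hs) = norm (f' y - f' x)" for x y
    by (rule mlnorm_1_eq_norm) (simp add: C1b_wit_def blinfun.diff_left)
  show "?D 0 x [] = f x" for x
    by (simp add: C1b_wit_def)
  show "bounded_multilinear j (?D j x)" if "j \<le> 1" for j x
    using bounded_multilinear_C1b_wit[OF that] .
  show "\<exists>d>0. \<forall>h. norm h < d \<longrightarrow>
      mlnorm j (\<lambda>hs. ?D j (x + h) hs - ?D j x hs - ?D (Suc j) x (h # hs)) \<le> e * norm h"
    if "j < 1" "0 < e" for j x e
  proof -
    obtain d where "d > 0" and d: "\<And>y. norm (y - x) < d \<Longrightarrow>
        norm (f y - f x - f' x (y - x)) \<le> e * norm (y - x)"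
      using der[of x] \<open>0 < e\<close> unfolding has_derivative_at_alt by blast
    then show ?thesis
      using that d[of "x + h" for h] by (auto simp: mlnorm_0 C1b_wit_def)
  qed
  show "\<exists>d>0. \<forall>y. norm (y - x) < d \<longrightarrow> mlnorm 1 (\<lambda>hs. ?D 1 y hs - ?D 1 x hs) < e"
    if "0 < e" for x e
    using cont that unfolding continuous_on_iff norm_D1_diff dist_norm by blast
  show "bdd_above (range (\<lambda>y. mlnorm j (?D j y)))" if "j \<le> 1" for j
  proof (cases "j = 0")
    case True
    then show ?thesis
      using B0 by (auto simp: mlnorm_0 C1b_wit_def intro!: bdd_aboveI)
  next
    case False
    with that have "j = 1" by simp
    then show ?thesis
      using B1 by (auto simp only: norm_D1 intro!: bdd_aboveI)
  qed
qed

lemma C1b_deriv_imp_Ckb_1: "C1b_deriv f f' \<Longrightarrow> Ckb 1 f"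
  unfolding Ckb_def using C1b_deriv_imp_Ckb_wit by blast

definition D1 :: "('a::real_normed_vector \<Rightarrow> 'b::real_normed_vector) \<Rightarrow> 'a \<Rightarrow> 'a \<Rightarrow>\<^sub>L 'b" where
  "D1 f x = Blinfun (\<lambda>h. Dw 1 f 1 x [h])"

lemma Ckb_imp_Ckb_wit_Dw: "Ckb k f \<Longrightarrow> Ckb_wit k f (Dw k f)"
  unfolding Ckb_def Dw_def by (rule someI_ex[of "Ckb_wit k f"])

lemma Ckb_1_imp_C1b_deriv: "Ckb 1 f \<Longrightarrow> C1b_deriv f (D1 f)"
  unfolding D1_def by (rule Ckb_wit_1_imp_C1b_deriv[OF Ckb_imp_Ckb_wit_Dw])

lemma C1b_deriv_D1_eq:
  assumes "C1b_deriv f f'"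
  shows "D1 f = f'"
proof
  fix x
  have "(f has_derivative blinfun_apply (D1 f x)) (at x)"
    using Ckb_1_imp_C1b_deriv[OF C1b_deriv_imp_Ckb_1[OF assms]]
    unfolding C1b_deriv_def has_bounded_C1_derivative_def by blast
  moreover have "(f has_derivative blinfun_apply (f' x)) (at x)"
    using assms unfolding C1b_deriv_def has_bounded_C1_derivative_def by blast
  ultimately show "D1 f x = f' x"
    by (metis has_derivative_unique blinfun_apply_inject)
qed

lemma Dw_1_eq_D1:
  assumes "Ckb 1 f"
  shows "Dw 1 f 1 x [h] = D1 f x h"
proof -
  have "bounded_linear (\<lambda>h. Dw 1 f 1 x [h])"
    by (intro bounded_multilinear_1_imp_bounded_linear Ckb_wit_multilinear[OF Ckb_imp_Ckb_wit_Dw[OF assms]]) simp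
  then show ?thesis
    unfolding D1_def by (simp add: bounded_linear_Blinfun_apply)
qed

lemma Dsup_le_iff:
  assumes "Ckb 1 f"
  shows "Dsup f \<le> L \<longleftrightarrow> (\<forall>x. norm (D1 f x) \<le> L)"
proof -
  have "mlnorm 1 (Dw 1 f 1 x) = norm (D1 f x)" for x
    by (rule mlnorm_1_eq_norm, rule Dw_1_eq_D1[OF assms])
  moreover have "bdd_above (range (\<lambda>x. norm (D1 f x)))"
    using Ckb_1_imp_C1b_deriv[OF assms]
    unfolding C1b_deriv_def has_bounded_C1_derivative_def bounded_iff bdd_above_def by auto
  ultimately show ?thesis
    unfolding Dsup_def by (simp add: cSUP_le_iff)
qed

lemma D_zero_at0_iff:
  assumes "Ckb 1 f"
  shows "D_zero_at0 f \<longleftrightarrow> D1 f 0 = 0"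
  unfolding D_zero_at0_def Dw_1_eq_D1[OF assms] by (auto intro: blinfun_eqI)

lemma Ckb_norm_1_ge:
  assumes "Ckb 1 f"
  shows "norm (f y) \<le> Ckb_norm 1 f" and "norm (D1 f y) \<le> Ckb_norm 1 f"
proof -
  have "bounded (range f)" and "bounded (range (D1 f))"
    using Ckb_1_imp_C1b_deriv[OF assms]
    unfolding C1b_deriv_def has_bounded_C1_derivative_def by auto
  then have bdd: "bdd_above (range (\<lambda>y. norm (f y)))" "bdd_above (range (\<lambda>y. norm (D1 f y)))"
    unfolding bounded_iff bdd_above_def by auto
  have "mlnorm 0 (Dw 1 f 0 y) = norm (f y)" for y
    using Ckb_wit_0[OF Ckb_imp_Ckb_wit_Dw[OF assms]] by (simp add: mlnorm_0)
  moreover have "mlnorm 1 (Dw 1 f 1 y) = norm (D1 f y)" for y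
    by (rule mlnorm_1_eq_norm, rule Dw_1_eq_D1[OF assms])
  ultimately have "Ckb_norm 1 f = max (SUP y. norm (f y)) (SUP y. norm (D1 f y))"
    unfolding Ckb_norm_def by (simp add: atMost_Suc)
  then show "norm (f y) \<le> Ckb_norm 1 f" and "norm (D1 f y) \<le> Ckb_norm 1 f"
    using cSUP_upper[OF UNIV_I bdd(1), of y] cSUP_upper[OF UNIV_I bdd(2), of y] by linarith+
qed

lemma bounded_multilinear_2_bound:
  assumes "bounded_multilinear 2 M"
  obtains B where "B \<ge> 0" and "\<And>h. bounded_linear (\<lambda>v. M [h, v])"
    and "\<And>h v. norm (M [h, v]) \<le> B * norm h * norm v"
proof -
  obtain B where B: "\<And>hs. length hs = 2 \<Longrightarrow> norm (M hs) \<le> B * prod_list (map norm hs)"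
    using assms unfolding bounded_multilinear_def by blast
  have "\<forall>hs i. length hs = 2 \<and> i < 2 \<longrightarrow> linear (\<lambda>h. M (hs[i := h]))"
    using assms unfolding bounded_multilinear_def by (elim conjE)
  from this[rule_format, of "[h, 0]" 1 for h] have lin: "linear (\<lambda>v. M [h, v])" for h
    by simp
  have bound: "norm (M [h, v]) \<le> max B 0 * norm h * norm v" for h v
  proof -
    have "norm (M [h, v]) \<le> B * (norm h * norm v)"
      using B[of "[h, v]"] by simp
    also have "\<dots> \<le> max B 0 * (norm h * norm v)"
      by (rule mult_right_mono) auto
    finally show ?thesis
      by (simp add: mult.assoc)
  qed
  have "bounded_linear (\<lambda>v. M [h, v])" for h
  proof (rule bounded_linear_intro[where K="max B 0 * norm h"])
    show "M [h, x + y] = M [h, x] + M [h, y]" for x y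
      using linear_add[OF lin] by simp
    show "M [h, r *\<^sub>R x] = r *\<^sub>R M [h, x]" for r x
      using linear_scale[OF lin] by simp
    show "norm (M [h, x]) \<le> norm x * (max B 0 * norm h)" for x
      using bound[of h x] by (simp add: algebra_simps)
  qed
  then show ?thesis
    using that[of "max B 0"] bound by simp
qed

lemma Ckb_wit_1_locally_lipschitz:
  assumes W: "Ckb_wit k f D" and k: "2 \<le> k"
  obtains d C where "d > 0" and "C \<ge> 0"
    and "\<And>y. norm (y - x) < d \<Longrightarrow> mlnorm 1 (\<lambda>hs. D 1 y hs - D 1 x hs) \<le> C * norm (y - x)"
proof -
  define P where "P y = Blinfun (\<lambda>v. D 1 y [v])" for y
  have P_apply: "blinfun_apply (P y) v = D 1 y [v]" for y v
    unfolding P_def using Ckb_wit_Blinfun_apply[OF W] k by simp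
  obtain B where "B \<ge> 0" and bl: "\<And>h. bounded_linear (\<lambda>v. D 2 x [h, v])"
    and B: "\<And>h v. norm (D 2 x [h, v]) \<le> B * norm h * norm v"
    using bounded_multilinear_2_bound[OF Ckb_wit_multilinear[OF W k]] by blast
  define Q where "Q h = Blinfun (\<lambda>v. D 2 x [h, v])" for h
  have Q_apply: "blinfun_apply (Q h) v = D 2 x [h, v]" for h v
    unfolding Q_def by (simp add: bounded_linear_Blinfun_apply[OF bl])
  have norm_Q: "norm (Q h) \<le> B * norm h" for h
    using \<open>B \<ge> 0\<close> B by (intro norm_blinfun_bound) (auto simp: Q_apply)
  obtain d where "d > 0" and d: "\<And>h. norm h < d \<Longrightarrow>
      mlnorm 1 (\<lambda>hs. D 1 (x + h) hs - D 1 x hs - D 2 x (h # hs)) \<le> 1 * norm h"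
    using Ckb_wit_derivative[OF W, of 1 1 x] k by (auto simp: numeral_2_eq_2)
  have "mlnorm 1 (\<lambda>hs. D 1 y hs - D 1 x hs) \<le> (1 + B) * norm (y - x)" if "norm (y - x) < d" for y
  proof -
    have "mlnorm 1 (\<lambda>hs. D 1 (x + (y - x)) hs - D 1 x hs - D 2 x ((y - x) # hs))
        = norm (P y - P x - Q (y - x))"
      by (rule mlnorm_1_eq_norm) (simp add: P_apply Q_apply blinfun.diff_left)
    then have "norm (P y - P x - Q (y - x)) \<le> norm (y - x)"
      using d[OF that] by simp
    moreover have "mlnorm 1 (\<lambda>hs. D 1 y hs - D 1 x hs) = norm (P y - P x)"
      by (rule mlnorm_1_eq_norm) (simp add: P_apply blinfun.diff_left)
    ultimately show ?thesis
      using norm_triangle_ineq[of "P y - P x - Q (y - x)" "Q (y - x)"] norm_Q[of "y - x"]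
      by (simp add: algebra_simps)
  qed
  then show ?thesis
    using \<open>d > 0\<close> \<open>B \<ge> 0\<close> by (intro that[of d "1 + B"]) auto
qed

lemma Ckb_imp_Ckb_1:
  assumes "Ckb k f" and "1 \<le> k"
  shows "Ckb 1 f"
proof (cases "k = 1")
  case False
  with assms have k: "2 \<le> k" by simp
  from assms obtain D where W: "Ckb_wit k f D"
    unfolding Ckb_def by blast
  have "\<exists>\<delta>>0. \<forall>y. norm (y - x) < \<delta> \<longrightarrow> mlnorm 1 (\<lambda>hs. D 1 y hs - D 1 x hs) < e"
    if "e > 0" for x e
  proof -
    obtain d C where "d > 0" "C \<ge> 0"
      and lip: "\<And>y. norm (y - x) < d \<Longrightarrow> mlnorm 1 (\<lambda>hs. D 1 y hs - D 1 x hs) \<le> C * norm (y - x)"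
      using Ckb_wit_1_locally_lipschitz[OF W k] by blast
    have "mlnorm 1 (\<lambda>hs. D 1 y hs - D 1 x hs) < e" if "norm (y - x) < min d (e / (C + 1))" for y
    proof -
      have "C * norm (y - x) \<le> C * (e / (C + 1))"
        using that \<open>C \<ge> 0\<close> by (intro mult_left_mono) auto
      also have "\<dots> < e"
        using \<open>C \<ge> 0\<close> \<open>e > 0\<close> by (simp add: field_simps)
      finally show ?thesis
        using lip[of y] that by simp
    qed
    then show ?thesis
      using \<open>d > 0\<close> \<open>C \<ge> 0\<close> \<open>e > 0\<close> by (intro exI[of _ "min d (e / (C + 1))"]) auto
  qed
  then have "Ckb_wit 1 f D"
    unfolding Ckb_wit_def
    using Ckb_wit_0[OF W] Ckb_wit_multilinear[OF W] Ckb_wit_derivative[OF W] Ckb_wit_bdd[OF W] k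
    by simp
  then show ?thesis
    unfolding Ckb_def by blast
qed (use assms in simp)

section \<open>Lipschitz perturbations of an invertible operator\<close>

locale invertible_blinfun =
  fixes A A' :: "'a::banach \<Rightarrow>\<^sub>L 'a"
  assumes left_inverse: "A' o\<^sub>L A = id_blinfun" and right_inverse: "A o\<^sub>L A' = id_blinfun"
begin

lemma inverse_apply [simp]: "A' (A v) = v"
  using arg_cong[OF left_inverse, of "\<lambda>T. blinfun_apply T v"] by simp

lemma apply_inverse [simp]: "A (A' v) = v"
  using arg_cong[OF right_inverse, of "\<lambda>T. blinfun_apply T v"] by simp

lemma lipschitz_perturbation_expansive:
  assumes lip: "\<And>x y. norm (\<psi> x - \<psi> y) \<le> L * norm (x - y)"
  shows "(1 - norm A' * L) * norm (x - y) \<le> norm A' * norm ((A x + \<psi> x) - (A y + \<psi> y))"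
proof -
  have "x - y = A' (((A x + \<psi> x) - (A y + \<psi> y)) - (\<psi> x - \<psi> y))"
    by (simp add: blinfun.diff_right blinfun.add_right)
  then have "norm (x - y) \<le> norm A' * norm (((A x + \<psi> x) - (A y + \<psi> y)) - (\<psi> x - \<psi> y))"
    by (metis norm_blinfun)
  also have "\<dots> \<le> norm A' * (norm ((A x + \<psi> x) - (A y + \<psi> y)) + L * norm (x - y))"
    by (intro mult_left_mono order_trans[OF norm_triangle_ineq4] add_left_mono lip) auto
  finally show ?thesis
    by (simp add: algebra_simps)
qed

text \<open>Surjectivity: \<open>A x + \<psi> x = z\<close> is the fixed point equation of the contraction
  \<open>w \<mapsto> A'(z - \<psi> w)\<close>.\<close>

lemma lipschitz_perturbation_bij:
  assumes lip: "\<And>x y. norm (\<psi> x - \<psi> y) \<le> L * norm (x - y)"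
    and "0 \<le> L" and small: "norm A' * L < 1"
  shows "bij (\<lambda>x. A x + \<psi> x)"
proof (rule bijI)
  show "inj (\<lambda>x. A x + \<psi> x)"
  proof (rule injI)
    fix x y assume "A x + \<psi> x = A y + \<psi> y"
    then have "(1 - norm A' * L) * norm (x - y) \<le> 0"
      using lipschitz_perturbation_expansive[OF lip, of x y] by simp
    then show "x = y"
      using small by (simp add: mult_le_0_iff)
  qed
  have "\<exists>w. A w + \<psi> w = z" for z
  proof -
    have "\<exists>!w. A' (z - \<psi> w) = w"
    proof (rule banach_fix_type)
      show "0 \<le> norm A' * L" and "norm A' * L < 1"
        using \<open>0 \<le> L\<close> small by auto
      have "dist (A' (z - \<psi> x)) (A' (z - \<psi> y)) \<le> norm A' * L * dist x y" for x y
      proof -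
        have "dist (A' (z - \<psi> x)) (A' (z - \<psi> y)) = norm (A' (\<psi> y - \<psi> x))"
          by (simp add: dist_norm blinfun.diff_right[symmetric] algebra_simps)
        also have "\<dots> \<le> norm A' * (L * norm (y - x))"
          by (intro order_trans[OF norm_blinfun] mult_left_mono lip) auto
        finally show ?thesis
          by (simp add: dist_norm norm_minus_commute mult.assoc)
      qed
      then show "\<forall>x y. dist (A' (z - \<psi> x)) (A' (z - \<psi> y)) \<le> norm A' * L * dist x y"
        by blast
    qed
    then obtain w where "A' (z - \<psi> w) = w"
      by blast
    then have "A w + \<psi> w = A (A' (z - \<psi> w)) + \<psi> w"
      by simp
    then show ?thesis
      by auto
  qed
  then show "surj (\<lambda>x. A x + \<psi> x)"
    by (metis surj_def)
qed

lemma lipschitz_perturbation_inv_lipschitz: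
  assumes lip: "\<And>x y. norm (\<psi> x - \<psi> y) \<le> L * norm (x - y)"
    and "0 \<le> L" and small: "norm A' * L < 1"
  defines "\<Psi> \<equiv> inv (\<lambda>x. A x + \<psi> x)"
  shows "norm (\<Psi> y - \<Psi> z) \<le> norm A' / (1 - norm A' * L) * norm (y - z)"
proof -
  have "A (\<Psi> y) + \<psi> (\<Psi> y) = y" for y
    unfolding \<Psi>_def using surj_f_inv_f[OF bij_is_surj[OF lipschitz_perturbation_bij[OF assms(1-3)]]]
    by simp
  then have "(1 - norm A' * L) * norm (\<Psi> y - \<Psi> z) \<le> norm A' * norm (y - z)"
    using lipschitz_perturbation_expansive[OF lip, of "\<Psi> y" "\<Psi> z"] by simp
  then show ?thesis
    using small by (simp add: field_simps)
qed

text \<open>\<open>inv_plus S\<close> is \<open>(A + S)\<^sup>-\<^sup>1\<close>, a junk value unless \<open>A + S\<close> is invertible.\<close>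

definition inv_plus :: "'a \<Rightarrow>\<^sub>L 'a \<Rightarrow> 'a \<Rightarrow>\<^sub>L 'a" where
  "inv_plus S = Blinfun (inv (\<lambda>x. A x + S x))"

context
  fixes S :: "'a \<Rightarrow>\<^sub>L 'a" and L :: real
  assumes S_le: "norm S \<le> L" and L_nonneg: "0 \<le> L" and small: "norm A' * L < 1"
begin

lemma S_lipschitz: "norm (S x - S y) \<le> L * norm (x - y)"
  using order_trans[OF norm_blinfun mult_right_mono[OF S_le norm_ge_zero], of "x - y"]
  by (simp add: blinfun.diff_right)

lemma bij_plus: "bij (\<lambda>x. A x + S x)"
  by (rule lipschitz_perturbation_bij[OF S_lipschitz L_nonneg small])

lemma inv_plus_bound: "norm (inv (\<lambda>x. A x + S x) v) \<le> norm v * (norm A' / (1 - norm A' * L))"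
proof -
  let ?w = "inv (\<lambda>x. A x + S x) v"
  have "A ?w + S ?w = v"
    using surj_f_inv_f[OF bij_is_surj[OF bij_plus]] by simp
  moreover have "(1 - norm A' * L) * norm (?w - 0) \<le> norm A' * norm ((A ?w + S ?w) - (A 0 + S 0))"
    by (rule lipschitz_perturbation_expansive[OF S_lipschitz])
  ultimately show ?thesis
    using small by (simp add: field_simps)
qed

lemma bounded_linear_inv_plus: "bounded_linear (inv (\<lambda>x. A x + S x))"
proof (rule bounded_linear_intro[where K="norm A' / (1 - norm A' * L)"])
  let ?i = "inv (\<lambda>x. A x + S x)"
  have left: "?i (A v + S v) = v" and right: "A (?i v) + S (?i v) = v" for v
    using inv_f_f[OF bij_is_inj[OF bij_plus]] surj_f_inv_f[OF bij_is_surj[OF bij_plus]] by auto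
  show "?i (x + y) = ?i x + ?i y" for x y
    using left[of "?i x + ?i y"] right[of x] right[of y]
    by (simp add: blinfun.add_right algebra_simps)
  show "?i (r *\<^sub>R x) = r *\<^sub>R ?i x" for r x
    using left[of "r *\<^sub>R ?i x"] right[of x]
    by (simp add: blinfun.scaleR_right scaleR_add_right[symmetric])
  show "norm (?i x) \<le> norm x * (norm A' / (1 - norm A' * L))" for x
    by (rule inv_plus_bound)
qed

lemma inv_plus_apply: "blinfun_apply (inv_plus S) = inv (\<lambda>x. A x + S x)"
  unfolding inv_plus_def by (rule bounded_linear_Blinfun_apply[OF bounded_linear_inv_plus])

lemma inv_plus_left [simp]: "inv_plus S (A v + S v) = v"
  using inv_f_f[OF bij_is_inj[OF bij_plus]] by (simp add: inv_plus_apply)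

lemma inv_plus_right [simp]: "A (inv_plus S v) + S (inv_plus S v) = v"
  using surj_f_inv_f[OF bij_is_surj[OF bij_plus]] by (simp add: inv_plus_apply)

lemma norm_inv_plus_le: "norm (inv_plus S) \<le> norm A' / (1 - norm A' * L)"
  using small inv_plus_bound by (intro norm_blinfun_bound) (auto simp: inv_plus_apply mult.commute)

end

lemma inv_plus_lipschitz:
  assumes "norm S\<^sub>1 \<le> L" "norm S\<^sub>2 \<le> L" "0 \<le> L" "norm A' * L < 1"
  shows "norm (inv_plus S\<^sub>1 - inv_plus S\<^sub>2) \<le> (norm A' / (1 - norm A' * L))\<^sup>2 * norm (S\<^sub>1 - S\<^sub>2)"
proof -
  let ?N = "norm A' / (1 - norm A' * L)"
  have "inv_plus S\<^sub>1 - inv_plus S\<^sub>2 = inv_plus S\<^sub>1 o\<^sub>L (S\<^sub>2 - S\<^sub>1) o\<^sub>L inv_plus S\<^sub>2"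
  proof (rule blinfun_eqI)
    fix v
    let ?w = "inv_plus S\<^sub>2 v"
    have "(S\<^sub>2 - S\<^sub>1) ?w = v - (A ?w + S\<^sub>1 ?w)"
      using inv_plus_right[OF assms(2-4)] by (simp add: blinfun.diff_left algebra_simps)
    then have "(inv_plus S\<^sub>1 o\<^sub>L (S\<^sub>2 - S\<^sub>1) o\<^sub>L inv_plus S\<^sub>2) v = inv_plus S\<^sub>1 (v - (A ?w + S\<^sub>1 ?w))"
      by simp
    also have "\<dots> = inv_plus S\<^sub>1 v - ?w"
      using inv_plus_left[OF assms(1,3,4)] by (simp add: blinfun.diff_right)
    finally show "(inv_plus S\<^sub>1 - inv_plus S\<^sub>2) v = (inv_plus S\<^sub>1 o\<^sub>L (S\<^sub>2 - S\<^sub>1) o\<^sub>L inv_plus S\<^sub>2) v"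
      by (simp add: blinfun.diff_left)
  qed
  also have "norm \<dots> \<le> norm (inv_plus S\<^sub>1) * norm (S\<^sub>2 - S\<^sub>1) * norm (inv_plus S\<^sub>2)"
    by (intro order_trans[OF norm_blinfun_compose] mult_right_mono norm_blinfun_compose) auto
  also have "\<dots> \<le> ?N * norm (S\<^sub>2 - S\<^sub>1) * ?N"
    using assms by (intro mult_mono norm_inv_plus_le mult_nonneg_nonneg) auto
  finally show ?thesis
    by (simp add: power2_eq_square norm_minus_commute algebra_simps)
qed

lemma inverse_has_bounded_C1_derivative:
  assumes r: "has_bounded_C1_derivative r R" and R_le: "\<And>x. norm (R x) \<le> L"
    and "0 \<le> L" and small: "norm A' * L < 1"
  defines "\<Psi> \<equiv> inv (\<lambda>x. A x + r x)"
  shows "bij (\<lambda>x. A x + r x)" and "has_bounded_C1_derivative \<Psi> (\<lambda>y. inv_plus (R (\<Psi> y)))"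
proof -
  let ?N = "norm A' / (1 - norm A' * L)"
  have lip: "norm (r x - r y) \<le> L * norm (x - y)" for x y
    by (rule has_bounded_C1_derivative_lipschitz[OF r R_le])
  show bij: "bij (\<lambda>x. A x + r x)"
    by (rule lipschitz_perturbation_bij[OF lip \<open>0 \<le> L\<close> small])
  have right: "A (\<Psi> y) + r (\<Psi> y) = y" for y
    unfolding \<Psi>_def using surj_f_inv_f[OF bij_is_surj[OF bij]] by simp
  have "dist (\<Psi> y) (\<Psi> z) \<le> ?N * dist y z" for y z
    using lipschitz_perturbation_inv_lipschitz[OF lip \<open>0 \<le> L\<close> small]
    unfolding \<Psi>_def dist_norm .
  then have \<Psi>_cont: "continuous_on UNIV \<Psi>"
    using small by (intro lipschitz_on_continuous_on[of ?N] lipschitz_onI) simp_all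
  have der: "(\<Psi> has_derivative blinfun_apply (inv_plus (R (\<Psi> y)))) (at y)" for y
  proof (rule has_derivative_inverse_basic[where f="\<lambda>x. A x + r x" and T=UNIV])
    show "((\<lambda>x. A x + r x) has_derivative blinfun_apply (A + R (\<Psi> y))) (at (\<Psi> y))"
      using has_bounded_C1_derivative_add[OF has_bounded_C1_derivative_blinfun r]
      unfolding has_bounded_C1_derivative_def by blast
    show "blinfun_apply (inv_plus (R (\<Psi> y))) \<circ> blinfun_apply (A + R (\<Psi> y)) = id"
      by (rule ext) (simp add: blinfun.add_left inv_plus_left[OF R_le \<open>0 \<le> L\<close> small])
    show "continuous (at y) \<Psi>"
      using \<Psi>_cont by (simp add: continuous_on_eq_continuous_at)
  qed (auto simp: right blinfun.bounded_linear_right)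
  have "continuous_on {S. norm S \<le> L} inv_plus"
    using inv_plus_lipschitz[OF _ _ \<open>0 \<le> L\<close> small]
    by (intro lipschitz_on_continuous_on[of "?N\<^sup>2"] lipschitz_onI) (auto simp: dist_norm)
  moreover have "continuous_on UNIV (\<lambda>y. R (\<Psi> y))"
    using r \<Psi>_cont unfolding has_bounded_C1_derivative_def
    by (auto intro: continuous_on_compose2[of UNIV R])
  ultimately have "continuous_on UNIV (\<lambda>y. inv_plus (R (\<Psi> y)))"
    by (rule continuous_on_compose2) (auto simp: R_le)
  moreover have "bounded (range (\<lambda>y. inv_plus (R (\<Psi> y))))"
    unfolding bounded_iff using norm_inv_plus_le[OF R_le \<open>0 \<le> L\<close> small] by blast
  ultimately show "has_bounded_C1_derivative \<Psi> (\<lambda>y. inv_plus (R (\<Psi> y)))"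
    unfolding has_bounded_C1_derivative_def using der by blast
qed

end

text \<open>\<open>L_r\<close>, \<open>L_u\<close> and \<open>L_s\<close> are the fixed points of the affine bounds that the chain rule
  gives for the derivatives of the three components of \<open>\<Theta>(\<Lambda>)\<close> in terms of those of \<open>\<Lambda>\<close>.\<close>

lemma L_r_fixpoint:
  assumes "Lc < 1"
  shows "a * Lc + Lg * (1 + Lc) + Lc * (a + L_r a Lg Lc) = L_r a Lg Lc"
proof -
  have "L_r a Lg Lc * (1 - Lc) = Lg + Lc * (2 * a + Lg)"
    using assms unfolding L_r_def by simp
  then show ?thesis
    by (simp add: algebra_simps)
qed

lemma L_u_fixpoint:
  assumes "L_r a Lg Lc * u + a * u < 1"
  shows "u * (L_u a u Lg Lc * (a + L_r a Lg Lc) + Lg * (1 + Lc)) = L_u a u Lg Lc"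
proof -
  have "L_u a u Lg Lc * (1 - L_r a Lg Lc * u - a * u) = u * (1 + Lc) * Lg"
    using assms unfolding L_u_def by simp
  then show ?thesis
    by (simp add: algebra_simps)
qed

lemma L_s_fixpoint:
  assumes "b * L_r a Lg Lc < 1" and "L_r a Lg Lc * b + s * b < 1"
  shows "(s * L_s a b s Lg Lc + Lg * (1 + Lc)) * (b / (1 - b * L_r a Lg Lc)) = L_s a b s Lg Lc"
proof -
  have "L_s a b s Lg Lc * (1 - L_r a Lg Lc * b - s * b) = b * (1 + Lc) * Lg"
    using assms(2) unfolding L_s_def by simp
  then show ?thesis
    using assms(1) by (simp add: field_simps)
qed

lemma L_m1_eq:
  assumes "b * L_r a Lg Lc < 1"
  shows "L_m1 a b Lg Lc = b / (1 - b * L_r a Lg Lc)"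
  using assms unfolding L_m1_def L_t_def by (simp add: field_simps power2_eq_square)

lemma L_r_nonneg: "0 \<le> a \<Longrightarrow> 0 \<le> Lg \<Longrightarrow> 0 \<le> Lc \<Longrightarrow> Lc < 1 \<Longrightarrow> 0 \<le> L_r a Lg Lc"
  unfolding L_r_def by simp

lemma L_u_nonneg: "0 \<le> u \<Longrightarrow> 0 \<le> Lg \<Longrightarrow> 0 \<le> Lc \<Longrightarrow> L_r a Lg Lc * u + a * u < 1 \<Longrightarrow> 0 \<le> L_u a u Lg Lc"
  unfolding L_u_def by simp

lemma L_s_nonneg: "0 \<le> b \<Longrightarrow> 0 \<le> Lg \<Longrightarrow> 0 \<le> Lc \<Longrightarrow> L_r a Lg Lc * b + s * b < 1 \<Longrightarrow> 0 \<le> L_s a b s Lg Lc"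
  unfolding L_s_def by simp

lemma L_u_le:
  assumes "theta2 1 a u Lg Lc < 1" and "L_r a Lg Lc * u + a * u < 1"
    and "0 \<le> u" "0 \<le> Lg" "0 \<le> Lc"
  shows "L_u a u Lg Lc \<le> 1 + Lc"
proof -
  let ?D = "1 - L_r a Lg Lc * u - a * u"
  have "u * Lg \<le> u * Lg + u * L_u a u Lg Lc"
    using assms L_u_nonneg[of u Lg Lc a] by simp
  also have "\<dots> < ?D"
    using assms(1) unfolding theta2_def by (simp add: algebra_simps)
  finally have "(1 + Lc) * (u * Lg) \<le> (1 + Lc) * ?D"
    using \<open>0 \<le> Lc\<close> by (intro mult_left_mono) auto
  then show ?thesis
    using assms(2) unfolding L_u_def by (simp add: divide_le_eq algebra_simps)
qed

lemma L_s_le: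
  assumes "theta3 1 a b s Lg Lc < 1" and "b * L_r a Lg Lc < 1" and "L_r a Lg Lc * b + s * b < 1"
    and "0 \<le> b" "0 \<le> s" "0 \<le> Lg" "0 \<le> Lc"
  shows "L_s a b s Lg Lc \<le> 1 + Lc"
proof -
  let ?M = "b / (1 - b * L_r a Lg Lc)" and ?Ls = "L_s a b s Lg Lc"
  have M_nonneg: "0 \<le> ?M"
    using assms by simp
  have "?M * (s + Lg) \<le> ?M * (s * (1 + ?M * ?Ls) + Lg * (1 + ?M * (1 + Lc)))"
    using assms M_nonneg L_s_nonneg[of b Lg Lc a s]
    by (intro mult_left_mono add_mono) (auto simp: algebra_simps)
  also have "\<dots> < 1"
    using assms(1) unfolding theta3_def L_m1_eq[OF assms(2)] by simp
  finally have "b * Lg < 1 - L_r a Lg Lc * b - s * b"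
    using assms(2) by (simp add: field_simps)
  then have "(1 + Lc) * (b * Lg) \<le> (1 + Lc) * (1 - L_r a Lg Lc * b - s * b)"
    using \<open>0 \<le> Lc\<close> by (intro mult_left_mono) auto
  then show ?thesis
    using assms(3) unfolding L_s_def by (simp add: divide_le_eq algebra_simps)
qed

lemma S_cond_2_constants:
  assumes S: "S_cond 2 a b u s Lg Lc"
    and "0 \<le> a" "0 \<le> b" "0 \<le> u" "0 \<le> s" "0 \<le> Lg" "0 \<le> Lc"
  shows "0 \<le> L_r a Lg Lc" "0 \<le> L_u a u Lg Lc" "0 \<le> L_s a b s Lg Lc"
    and "b * L_r a Lg Lc < 1" "L_u a u Lg Lc \<le> 1 + Lc" "L_s a b s Lg Lc \<le> 1 + Lc"
    and "a * Lc + Lg * (1 + Lc) + Lc * (a + L_r a Lg Lc) = L_r a Lg Lc"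
    and "u * (L_u a u Lg Lc * (a + L_r a Lg Lc) + Lg * (1 + Lc)) = L_u a u Lg Lc"
    and "(s * L_s a b s Lg Lc + Lg * (1 + Lc)) * (b / (1 - b * L_r a Lg Lc)) = L_s a b s Lg Lc"
proof -
  have Lc: "Lc < 1" and Lr: "b * L_r a Lg Lc < 1" and Lu: "L_r a Lg Lc * u + a * u < 1"
    and Ls: "L_r a Lg Lc * b + s * b < 1"
    and theta: "theta2 1 a u Lg Lc < 1" "theta3 1 a b s Lg Lc < 1"
    using S unfolding S_cond_def by (auto simp: mult.commute)
  show "0 \<le> L_r a Lg Lc" "0 \<le> L_u a u Lg Lc" "0 \<le> L_s a b s Lg Lc" "b * L_r a Lg Lc < 1"
    using assms Lc Lu Ls Lr by (simp_all add: L_r_nonneg L_u_nonneg L_s_nonneg)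
  show "L_u a u Lg Lc \<le> 1 + Lc" "L_s a b s Lg Lc \<le> 1 + Lc"
    using L_u_le[OF theta(1) Lu] L_s_le[OF theta(2) Lr Ls] assms by simp_all
  show "a * Lc + Lg * (1 + Lc) + Lc * (a + L_r a Lg Lc) = L_r a Lg Lc"
    "u * (L_u a u Lg Lc * (a + L_r a Lg Lc) + Lg * (1 + Lc)) = L_u a u Lg Lc"
    "(s * L_s a b s Lg Lc + Lg * (1 + Lc)) * (b / (1 - b * L_r a Lg Lc)) = L_s a b s Lg Lc"
    by (rule L_r_fixpoint[OF Lc], rule L_u_fixpoint[OF Lu], rule L_s_fixpoint[OF Lr Ls])
qed

section \<open>Bounded operators into and out of the direct sum\<close>

definition proj_c :: "('c::real_normed_vector, 'u::real_normed_vector, 's::real_normed_vector) dsum \<Rightarrow>\<^sub>L 'c"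
  where "proj_c = Blinfun pc"
definition proj_u :: "('c::real_normed_vector, 'u::real_normed_vector, 's::real_normed_vector) dsum \<Rightarrow>\<^sub>L 'u"
  where "proj_u = Blinfun pu"
definition proj_s :: "('c::real_normed_vector, 'u::real_normed_vector, 's::real_normed_vector) dsum \<Rightarrow>\<^sub>L 's"
  where "proj_s = Blinfun ps"

lemma bounded_linear_components: "bounded_linear pc" "bounded_linear pu" "bounded_linear ps"
  by (auto intro!: bounded_linear_intro[where K=1] simp: norm_pc_le norm_pu_le norm_ps_le)

lemma proj_apply [simp]:
  "blinfun_apply proj_c x = pc x" "blinfun_apply proj_u x = pu x" "blinfun_apply proj_s x = ps x"
  by (simp_all add: proj_c_def proj_u_def proj_s_def bounded_linear_Blinfun_apply bounded_linear_components)

lemma norm_proj_le: "norm proj_c \<le> 1" "norm proj_u \<le> 1" "norm proj_s \<le> 1"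
  by (auto intro!: norm_blinfun_bound simp: norm_pc_le norm_pu_le norm_ps_le)

definition DS_blinfun :: "('a::real_normed_vector \<Rightarrow>\<^sub>L 'c::real_normed_vector) \<Rightarrow> ('a \<Rightarrow>\<^sub>L 'u::real_normed_vector)
    \<Rightarrow> ('a \<Rightarrow>\<^sub>L 's::real_normed_vector) \<Rightarrow> 'a \<Rightarrow>\<^sub>L ('c, 'u, 's) dsum" where
  "DS_blinfun A B C = Blinfun (\<lambda>h. DS (A h) (B h) (C h))"

lemma DS_blinfun_apply [simp]:
  fixes A :: "'a::real_normed_vector \<Rightarrow>\<^sub>L 'c::real_normed_vector"
  shows "blinfun_apply (DS_blinfun A B C) h = DS (A h) (B h) (C h)"
proof -
  have "bounded_linear (\<lambda>h. DS (A h) (B h) (C h))"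
  proof (rule bounded_linear_intro[where K="norm A + norm B + norm C"])
    show "DS (A (x + y)) (B (x + y)) (C (x + y)) = DS (A x) (B x) (C x) + DS (A y) (B y) (C y)" for x y
      by (simp add: plus_dsum_def blinfun.add_right)
    show "DS (A (r *\<^sub>R x)) (B (r *\<^sub>R x)) (C (r *\<^sub>R x)) = r *\<^sub>R DS (A x) (B x) (C x)" for r x
      by (simp add: scaleR_dsum_def blinfun.scaleR_right)
    show "norm (DS (A x) (B x) (C x)) \<le> norm x * (norm A + norm B + norm C)" for x
    proof -
      have le: "norm (T x) \<le> (norm A + norm B + norm C) * norm x"
        if "norm T \<le> norm A + norm B + norm C" for T :: "'a \<Rightarrow>\<^sub>L 'z::real_normed_vector"
        using order_trans[OF norm_blinfun mult_right_mono[OF that norm_ge_zero]] .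
      show ?thesis
        using le[of A] le[of B] le[of C] by (simp add: norm_dsum_def mult.commute)
    qed
  qed
  then show ?thesis
    unfolding DS_blinfun_def by (simp add: bounded_linear_Blinfun_apply)
qed

lemma norm_DS_blinfun_le:
  assumes "norm A \<le> L" "norm B \<le> L" "norm C \<le> L"
  shows "norm (DS_blinfun A B C) \<le> L"
proof (rule norm_blinfun_bound)
  show "0 \<le> L"
    using norm_ge_zero[of A] assms by linarith
  fix x
  have "norm (A x) \<le> L * norm x" "norm (B x) \<le> L * norm x" "norm (C x) \<le> L * norm x"
    using assms by (auto intro!: order_trans[OF norm_blinfun] mult_right_mono)
  then show "norm (DS_blinfun A B C x) \<le> L * norm x"
    by (simp add: norm_dsum_def)
qed

lemma proj_DS_blinfun [simp]:
  "proj_c o\<^sub>L DS_blinfun A B C = A" "proj_u o\<^sub>L DS_blinfun A B C = B" "proj_s o\<^sub>L DS_blinfun A B C = C"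
  by (auto intro: blinfun_eqI)

lemma DS_blinfun_0 [simp]: "DS_blinfun 0 0 0 = 0"
  by (rule blinfun_eqI) (simp add: zero_dsum_def)

lemma has_bounded_C1_derivative_DS:
  fixes f :: "'a::real_normed_vector \<Rightarrow> 'c::real_normed_vector"
    and g :: "'a \<Rightarrow> 'u::real_normed_vector" and h :: "'a \<Rightarrow> 's::real_normed_vector"
  assumes "has_bounded_C1_derivative f F" "has_bounded_C1_derivative g G" "has_bounded_C1_derivative h H"
  shows "has_bounded_C1_derivative (\<lambda>x. DS (f x) (g x) (h x)) (\<lambda>x. DS_blinfun (F x) (G x) (H x))"
proof -
  define emb_c :: "'c \<Rightarrow>\<^sub>L ('c, 'u, 's) dsum" where "emb_c = DS_blinfun id_blinfun 0 0"
  define emb_u :: "'u \<Rightarrow>\<^sub>L ('c, 'u, 's) dsum" where "emb_u = DS_blinfun 0 id_blinfun 0"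
  define emb_s :: "'s \<Rightarrow>\<^sub>L ('c, 'u, 's) dsum" where "emb_s = DS_blinfun 0 0 id_blinfun"
  have DS_eq: "DS a b c = emb_c a + emb_u b + emb_s c" for a b c
    by (simp add: emb_c_def emb_u_def emb_s_def plus_dsum_def)
  have "DS_blinfun A B C = (emb_c o\<^sub>L A) + (emb_u o\<^sub>L B) + (emb_s o\<^sub>L C)"
    for A :: "'a \<Rightarrow>\<^sub>L 'c" and B :: "'a \<Rightarrow>\<^sub>L 'u" and C :: "'a \<Rightarrow>\<^sub>L 's"
    by (rule blinfun_eqI) (simp add: DS_eq blinfun.add_left)
  then show ?thesis
    using assms unfolding DS_eq
    by (auto intro!: has_bounded_C1_derivative_add has_bounded_C1_derivative_blinfun_apply)
qed

lemma C1b_deriv_DS: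
  assumes "C1b_deriv f F" "C1b_deriv g G" "C1b_deriv h H"
  shows "C1b_deriv (\<lambda>x. DS (f x) (g x) (h x)) (\<lambda>x. DS_blinfun (F x) (G x) (H x))"
proof -
  obtain Bf Bg Bh where "\<And>x. norm (f x) \<le> Bf" "\<And>x. norm (g x) \<le> Bg" "\<And>x. norm (h x) \<le> Bh"
    using assms unfolding C1b_deriv_def bounded_iff by auto
  then have "norm (DS (f x) (g x) (h x)) \<le> max Bf (max Bg Bh)" for x
    unfolding norm_dsum_def by (intro max.mono) simp_all
  then have "bounded (range (\<lambda>x. DS (f x) (g x) (h x)))"
    unfolding bounded_iff by blast
  then show ?thesis
    using assms has_bounded_C1_derivative_DS unfolding C1b_deriv_def by blast
qed

lemma Dsup_blinfun_comp_le_iff: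
  assumes "Ckb 1 \<Lambda>"
  shows "Dsup (\<lambda>x. blinfun_apply P (\<Lambda> x)) \<le> L \<longleftrightarrow> (\<forall>x. norm (P o\<^sub>L D1 \<Lambda> x) \<le> L)"
proof -
  have P\<Lambda>: "C1b_deriv (\<lambda>x. P (\<Lambda> x)) (\<lambda>x. P o\<^sub>L D1 \<Lambda> x)"
    by (rule C1b_deriv_blinfun_apply[OF Ckb_1_imp_C1b_deriv[OF assms]])
  show ?thesis
    using Dsup_le_iff[OF C1b_deriv_imp_Ckb_1[OF P\<Lambda>]] unfolding C1b_deriv_D1_eq[OF P\<Lambda>] .
qed

lemma mem_Gamma0_iff:
  "\<Lambda> \<in> Gamma0 Lr Lu Ls \<longleftrightarrow> Ckb 1 \<Lambda> \<and> \<Lambda> 0 = 0 \<and> D1 \<Lambda> 0 = 0 \<and>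
     (\<forall>x. norm (proj_c o\<^sub>L D1 \<Lambda> x) \<le> Lr \<and> norm (proj_u o\<^sub>L D1 \<Lambda> x) \<le> Lu \<and>
          norm (proj_s o\<^sub>L D1 \<Lambda> x) \<le> Ls)"
proof -
  have "Dsup (\<lambda>x. pc (\<Lambda> x)) = Dsup (\<lambda>x. proj_c (\<Lambda> x))"
    and "Dsup (\<lambda>x. pu (\<Lambda> x)) = Dsup (\<lambda>x. proj_u (\<Lambda> x))"
    and "Dsup (\<lambda>x. ps (\<Lambda> x)) = Dsup (\<lambda>x. proj_s (\<Lambda> x))"
    by simp_all
  then show ?thesis
    unfolding Gamma0_def
    using D_zero_at0_iff Dsup_blinfun_comp_le_iff[of \<Lambda> proj_c] Dsup_blinfun_comp_le_iff[of \<Lambda> proj_u]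
      Dsup_blinfun_comp_le_iff[of \<Lambda> proj_s]
    by auto
qed

lemma C1b_deriv_0: "C1b_deriv (\<lambda>_. 0) (\<lambda>_. 0)"
  unfolding C1b_deriv_def has_bounded_C1_derivative_def by (auto simp: zero_blinfun.rep_eq)

lemma zero_mem_Gamma0:
  assumes "0 \<le> Lr" "0 \<le> Lu" "0 \<le> Ls"
  shows "(\<lambda>_::'c::real_normed_vector. 0 :: ('c, 'u::real_normed_vector, 's::real_normed_vector) dsum)
    \<in> Gamma0 Lr Lu Ls"
proof -
  have Z: "C1b_deriv (\<lambda>_::'c. 0 :: ('c, 'u, 's) dsum) (\<lambda>_. 0)"
    by (rule C1b_deriv_0)
  show ?thesis
    using assms C1b_deriv_imp_Ckb_1[OF Z] C1b_deriv_D1_eq[OF Z] unfolding mem_Gamma0_iff by simp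
qed

lemma Ckb_norm_1_tendsto_0_imp_tendsto:
  assumes F: "\<And>m. Ckb 1 (F m)" and \<Lambda>: "Ckb 1 \<Lambda>"
    and lim: "(\<lambda>m. Ckb_norm 1 (\<lambda>x. F m x - \<Lambda> x)) \<longlonglongrightarrow> 0"
  shows "(\<lambda>m. F m y) \<longlonglongrightarrow> \<Lambda> y" and "(\<lambda>m. D1 (F m) y) \<longlonglongrightarrow> D1 \<Lambda> y"
proof -
  have diff: "C1b_deriv (\<lambda>x. F m x - \<Lambda> x) (\<lambda>x. D1 (F m) x - D1 \<Lambda> x)" for m
    using C1b_deriv_diff[OF Ckb_1_imp_C1b_deriv[OF F] Ckb_1_imp_C1b_deriv[OF \<Lambda>]] .
  have "norm (F m y - \<Lambda> y) \<le> Ckb_norm 1 (\<lambda>x. F m x - \<Lambda> x)"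
    and "norm (D1 (F m) y - D1 \<Lambda> y) \<le> Ckb_norm 1 (\<lambda>x. F m x - \<Lambda> x)" for m
    using Ckb_norm_1_ge[OF C1b_deriv_imp_Ckb_1[OF diff], of m y]
    unfolding C1b_deriv_D1_eq[OF diff] by simp_all
  then show "(\<lambda>m. F m y) \<longlonglongrightarrow> \<Lambda> y" and "(\<lambda>m. D1 (F m) y) \<longlonglongrightarrow> D1 \<Lambda> y"
    by (auto intro!: LIM_zero_cancel Lim_null_comparison[OF always_eventually lim])
qed

lemma norm_blinfun_compose_le_limit:
  assumes "X \<longlonglongrightarrow> x" and "\<And>m. norm (P o\<^sub>L X m) \<le> L"
  shows "norm (P o\<^sub>L x) \<le> L"
  by (rule LIMSEQ_le_const2[OF tendsto_norm[OF
        bounded_bilinear.tendsto[OF bounded_bilinear_blinfun_compose tendsto_const assms(1)]]])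
    (use assms(2) in auto)

lemma Gamma0_closed:
  "C1b_closed (Gamma0 Lr Lu Ls :: ('c::real_normed_vector \<Rightarrow>
      ('c, 'u::real_normed_vector, 's::real_normed_vector) dsum) set)"
  unfolding C1b_closed_def
proof (intro allI impI, elim conjE)
  fix F :: "nat \<Rightarrow> 'c \<Rightarrow> ('c, 'u, 's) dsum" and \<Lambda>
  assume F: "\<forall>m. F m \<in> Gamma0 Lr Lu Ls" and \<Lambda>: "Ckb 1 \<Lambda>"
    and lim: "(\<lambda>m. Ckb_norm 1 (\<lambda>x. F m x - \<Lambda> x)) \<longlonglongrightarrow> 0"
  have F': "Ckb 1 (F m)" "F m 0 = 0" "D1 (F m) 0 = 0"
    "norm (proj_c o\<^sub>L D1 (F m) x) \<le> Lr" "norm (proj_u o\<^sub>L D1 (F m) x) \<le> Lu"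
    "norm (proj_s o\<^sub>L D1 (F m) x) \<le> Ls" for m x
    using F unfolding mem_Gamma0_iff by auto
  note val = Ckb_norm_1_tendsto_0_imp_tendsto(1)[OF F'(1) \<Lambda> lim]
  note der = Ckb_norm_1_tendsto_0_imp_tendsto(2)[OF F'(1) \<Lambda> lim]
  have "\<Lambda> 0 = 0" and "D1 \<Lambda> 0 = 0"
    using LIMSEQ_unique[OF val[of 0]] LIMSEQ_unique[OF der[of 0]] by (simp_all add: F')
  moreover have "norm (proj_c o\<^sub>L D1 \<Lambda> x) \<le> Lr" "norm (proj_u o\<^sub>L D1 \<Lambda> x) \<le> Lu"
    "norm (proj_s o\<^sub>L D1 \<Lambda> x) \<le> Ls" for x
    using F' by (auto intro: norm_blinfun_compose_le_limit[OF der])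
  ultimately show "\<Lambda> \<in> Gamma0 Lr Lu Ls"
    unfolding mem_Gamma0_iff using \<Lambda> F' by blast
qed

section \<open>Invariance of \<open>\<Gamma>\<^sub>0\<close> under \<open>\<Theta>\<close>\<close>

locale Theta_setting = invertible_blinfun Ac Aci
  for Ac Aci :: "'c::banach \<Rightarrow>\<^sub>L 'c" +
  fixes Aui :: "'u::banach \<Rightarrow>\<^sub>L 'u" and As :: "'s::banach \<Rightarrow>\<^sub>L 's"
    and g :: "('c, 'u, 's) dsum \<Rightarrow> ('c, 'u, 's) dsum"
    and G :: "('c, 'u, 's) dsum \<Rightarrow> ('c, 'u, 's) dsum \<Rightarrow>\<^sub>L ('c, 'u, 's) dsum"
    and kc :: "'c \<Rightarrow> 'c" and Kc :: "'c \<Rightarrow> 'c \<Rightarrow>\<^sub>L 'c"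
    and \<Lambda> :: "'c \<Rightarrow> ('c, 'u, 's) dsum"
    and Lg Lc Lr Lu Ls :: real
  assumes g: "C1b_deriv g G" and g_0: "g 0 = 0" and G_0: "G 0 = 0" and G_le: "\<And>y. norm (G y) \<le> Lg"
    and kc: "C1b_deriv kc Kc" and kc_0: "kc 0 = 0" and Kc_0: "Kc 0 = 0"
    and Kc_le: "\<And>x. norm (Kc x) \<le> Lc"
    and \<Lambda>_mem: "\<Lambda> \<in> Gamma0 Lr Lu Ls"
    and Lg_nonneg: "0 \<le> Lg" and Lc_nonneg: "0 \<le> Lc" and Lr_small: "norm Aci * Lr < 1"
    and Lu_le: "Lu \<le> 1 + Lc" and Ls_le: "Ls \<le> 1 + Lc"
begin

abbreviation "r x \<equiv> pc (\<Lambda> x)"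
abbreviation "ku x \<equiv> pu (\<Lambda> x)"
abbreviation "ks x \<equiv> ps (\<Lambda> x)"
abbreviation "Dr x \<equiv> proj_c o\<^sub>L D1 \<Lambda> x"
abbreviation "Dku x \<equiv> proj_u o\<^sub>L D1 \<Lambda> x"
abbreviation "Dks x \<equiv> proj_s o\<^sub>L D1 \<Lambda> x"

lemma
  shows \<Lambda>_components: "C1b_deriv r Dr" "C1b_deriv ku Dku" "C1b_deriv ks Dks"
    and \<Lambda>_components_0: "r 0 = 0" "ku 0 = 0" "ks 0 = 0" "Dr 0 = 0" "Dku 0 = 0" "Dks 0 = 0"
    and \<Lambda>_derivatives_le: "norm (Dr x) \<le> Lr" "norm (Dku x) \<le> Lu" "norm (Dks x) \<le> Ls"
proof -
  have "Ckb 1 \<Lambda>" and \<Lambda>_0: "\<Lambda> 0 = 0" and D\<Lambda>_0: "D1 \<Lambda> 0 = 0"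
    using \<Lambda>_mem unfolding mem_Gamma0_iff by auto
  from Ckb_1_imp_C1b_deriv[OF this(1)] have "C1b_deriv \<Lambda> (D1 \<Lambda>)" .
  from C1b_deriv_blinfun_apply[OF this, of proj_c] C1b_deriv_blinfun_apply[OF this, of proj_u]
    C1b_deriv_blinfun_apply[OF this, of proj_s]
  show "C1b_deriv r Dr" "C1b_deriv ku Dku" "C1b_deriv ks Dks"
    by simp_all
  show "r 0 = 0" "ku 0 = 0" "ks 0 = 0" "Dr 0 = 0" "Dku 0 = 0" "Dks 0 = 0"
    using \<Lambda>_0 D\<Lambda>_0 by simp_all
  show "norm (Dr x) \<le> Lr" "norm (Dku x) \<le> Lu" "norm (Dks x) \<le> Ls"
    using \<Lambda>_mem unfolding mem_Gamma0_iff by auto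
qed

lemma Lr_nonneg: "0 \<le> Lr"
  using norm_ge_zero \<Lambda>_derivatives_le(1) order_trans by blast

abbreviation "\<Phi> x \<equiv> Ac x + r x"
abbreviation "\<Psi> \<equiv> inv \<Phi>"

lemma \<Phi>_bij: "bij \<Phi>"
  and \<Psi>_deriv: "has_bounded_C1_derivative \<Psi> (\<lambda>y. inv_plus (Dr (\<Psi> y)))"
  using inverse_has_bounded_C1_derivative[OF _ \<Lambda>_derivatives_le(1) Lr_nonneg Lr_small]
    \<Lambda>_components(1) unfolding C1b_deriv_def by auto

lemma norm_D\<Psi>_le: "norm (inv_plus (Dr y)) \<le> norm Aci / (1 - norm Aci * Lr)"
  by (rule norm_inv_plus_le[OF \<Lambda>_derivatives_le(1) Lr_nonneg Lr_small])

lemma \<Psi>_0: "\<Psi> 0 = 0"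
  using inv_f_f[OF bij_is_inj[OF \<Phi>_bij], of 0] by (simp add: \<Lambda>_components_0)

lemma \<Phi>_deriv: "has_bounded_C1_derivative \<Phi> (\<lambda>x. Ac + Dr x)"
  using has_bounded_C1_derivative_add[OF has_bounded_C1_derivative_blinfun] \<Lambda>_components(1)
  unfolding C1b_deriv_def by blast

lemma norm_D\<Phi>_le: "norm (Ac + Dr x) \<le> norm Ac + Lr"
  using norm_triangle_ineq[of Ac "Dr x"] \<Lambda>_derivatives_le(1)[of x] by simp

abbreviation "K \<equiv> Kmap kc ku ks"
abbreviation "DK x \<equiv> DS_blinfun (id_blinfun + Kc x) (Dku x) (Dks x)"

lemma K_deriv: "has_bounded_C1_derivative K DK"
proof -
  have "has_bounded_C1_derivative (\<lambda>x. x + kc x) (\<lambda>x. id_blinfun + Kc x)"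
    using has_bounded_C1_derivative_add[OF has_bounded_C1_derivative_ident] kc
    unfolding C1b_deriv_def by blast
  then show ?thesis
    using has_bounded_C1_derivative_DS \<Lambda>_components(2,3)
    unfolding C1b_deriv_def Kmap_def[abs_def] by blast
qed

lemma norm_DK_le: "norm (DK x) \<le> 1 + Lc"
proof (rule norm_DS_blinfun_le)
  show "norm (id_blinfun + Kc x) \<le> 1 + Lc"
    using norm_triangle_ineq[of id_blinfun "Kc x"] norm_blinfun_id_le[where 'a='c] Kc_le[of x]
    by linarith
  show "norm (Dku x) \<le> 1 + Lc" "norm (Dks x) \<le> 1 + Lc"
    using \<Lambda>_derivatives_le(2,3) Lu_le Ls_le by (auto intro: order_trans)
qed

abbreviation "DgK x \<equiv> G (K x) o\<^sub>L DK x"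

lemma gK_deriv: "C1b_deriv (\<lambda>x. g (K x)) DgK"
  by (rule C1b_deriv_compose[OF K_deriv g])

lemma norm_DgK_le: "norm (DgK x) \<le> Lg * (1 + Lc)"
  by (rule order_trans[OF norm_blinfun_compose mult_mono[OF G_le norm_DK_le Lg_nonneg norm_ge_zero]])

abbreviation "Theta_c x \<equiv> Ac (kc x) + pc (g (K x)) - kc (\<Phi> x)"
abbreviation "DTheta_c x \<equiv> (Ac o\<^sub>L Kc x) + (proj_c o\<^sub>L DgK x) - (Kc (\<Phi> x) o\<^sub>L (Ac + Dr x))"

abbreviation "Theta_u x \<equiv> Aui (ku (\<Phi> x)) - Aui (pu (g (K x)))"
abbreviation "DTheta_u x \<equiv> (Aui o\<^sub>L (Dku (\<Phi> x) o\<^sub>L (Ac + Dr x))) - (Aui o\<^sub>L (proj_u o\<^sub>L DgK x))"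

abbreviation "Theta_s x \<equiv> As (ks x) + ps (g (K x))"
abbreviation "DTheta_s x \<equiv> (As o\<^sub>L Dks x) + (proj_s o\<^sub>L DgK x)"

lemma Theta_eq: "Theta Ac Aui As g kc \<Lambda> = (\<lambda>x. DS (Theta_c x) (Theta_u x) (Theta_s (\<Psi> x)))"
  unfolding Theta_def Let_def ..

lemma Theta_c_deriv: "C1b_deriv Theta_c DTheta_c"
  using C1b_deriv_diff[OF C1b_deriv_add[OF C1b_deriv_blinfun_apply[OF kc, of Ac]
        C1b_deriv_blinfun_apply[OF gK_deriv, of proj_c]] C1b_deriv_compose[OF \<Phi>_deriv kc]]
  by simp

lemma norm_DTheta_c_le: "norm (DTheta_c x) \<le> norm Ac * Lc + Lg * (1 + Lc) + Lc * (norm Ac + Lr)"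
proof -
  have "norm (DTheta_c x) \<le>
      norm (Ac o\<^sub>L Kc x) + norm (proj_c o\<^sub>L DgK x) + norm (Kc (\<Phi> x) o\<^sub>L (Ac + Dr x))"
    by (intro order_trans[OF norm_triangle_ineq4] add_right_mono norm_triangle_ineq)
  also have "\<dots> \<le> norm Ac * Lc + 1 * (Lg * (1 + Lc)) + Lc * (norm Ac + Lr)"
    by (intro add_mono order_trans[OF norm_blinfun_compose] mult_mono Kc_le norm_proj_le
        norm_DgK_le norm_D\<Phi>_le Lc_nonneg) auto
  finally show ?thesis
    by simp
qed

lemma Theta_u_deriv: "C1b_deriv Theta_u DTheta_u"
  using C1b_deriv_diff[OF C1b_deriv_blinfun_apply[OF C1b_deriv_compose[OF \<Phi>_deriv \<Lambda>_components(2)], of Aui]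
      C1b_deriv_blinfun_apply[OF C1b_deriv_blinfun_apply[OF gK_deriv, of proj_u], of Aui]]
  by simp

lemma norm_DTheta_u_le: "norm (DTheta_u x) \<le> norm Aui * (Lu * (norm Ac + Lr) + Lg * (1 + Lc))"
proof -
  have "norm (DTheta_u x) \<le>
      norm Aui * norm (Dku (\<Phi> x) o\<^sub>L (Ac + Dr x)) + norm Aui * norm (proj_u o\<^sub>L DgK x)"
    by (intro order_trans[OF norm_triangle_ineq4] add_mono norm_blinfun_compose)
  also have "\<dots> \<le> norm Aui * (Lu * (norm Ac + Lr)) + norm Aui * (1 * (Lg * (1 + Lc)))"
    using order_trans[OF norm_ge_zero \<Lambda>_derivatives_le(2)]
    by (intro add_mono mult_left_mono order_trans[OF norm_blinfun_compose] mult_mono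
        \<Lambda>_derivatives_le norm_D\<Phi>_le norm_proj_le norm_DgK_le) auto
  finally show ?thesis
    by (simp add: algebra_simps)
qed

lemma Theta_s_deriv:
  "C1b_deriv (\<lambda>y. Theta_s (\<Psi> y)) (\<lambda>y. DTheta_s (\<Psi> y) o\<^sub>L inv_plus (Dr (\<Psi> y)))"
  using C1b_deriv_compose[OF \<Psi>_deriv C1b_deriv_add[OF C1b_deriv_blinfun_apply[OF \<Lambda>_components(3), of As]
        C1b_deriv_blinfun_apply[OF gK_deriv, of proj_s]]]
  by simp

lemma norm_DTheta_s_le:
  "norm (DTheta_s (\<Psi> y) o\<^sub>L inv_plus (Dr (\<Psi> y)))
    \<le> (norm As * Ls + Lg * (1 + Lc)) * (norm Aci / (1 - norm Aci * Lr))"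
proof -
  have "norm (DTheta_s x) \<le> norm As * Ls + 1 * (Lg * (1 + Lc))" for x
    by (intro order_trans[OF norm_triangle_ineq] add_mono order_trans[OF norm_blinfun_compose]
        mult_mono mult_left_mono \<Lambda>_derivatives_le norm_proj_le norm_DgK_le) auto
  then show ?thesis
    using Lg_nonneg Lc_nonneg order_trans[OF norm_ge_zero \<Lambda>_derivatives_le(3)]
    by (intro order_trans[OF norm_blinfun_compose] mult_mono norm_D\<Psi>_le) auto
qed

lemma Theta_in_Gamma0:
  assumes "norm Ac * Lc + Lg * (1 + Lc) + Lc * (norm Ac + Lr) \<le> Lr"
    and "norm Aui * (Lu * (norm Ac + Lr) + Lg * (1 + Lc)) \<le> Lu"
    and "(norm As * Ls + Lg * (1 + Lc)) * (norm Aci / (1 - norm Aci * Lr)) \<le> Ls"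
  shows "Theta Ac Aui As g kc \<Lambda> \<in> Gamma0 Lr Lu Ls"
proof -
  let ?T = "\<lambda>x. DS_blinfun (DTheta_c x) (DTheta_u x) (DTheta_s (\<Psi> x) o\<^sub>L inv_plus (Dr (\<Psi> x)))"
  have T: "C1b_deriv (Theta Ac Aui As g kc \<Lambda>) ?T"
    unfolding Theta_eq by (rule C1b_deriv_DS[OF Theta_c_deriv Theta_u_deriv Theta_s_deriv])
  have K_0: "K 0 = 0"
    by (simp add: Kmap_def kc_0 \<Lambda>_components_0 zero_dsum_def)
  have "Theta Ac Aui As g kc \<Lambda> 0 = 0" and "?T 0 = 0"
    unfolding Theta_eq using \<Psi>_0 K_0 g_0 G_0 kc_0 Kc_0 \<Lambda>_components_0 by (simp_all add: zero_dsum_def)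
  moreover have "norm (DTheta_c x) \<le> Lr" "norm (DTheta_u x) \<le> Lu"
    "norm (DTheta_s (\<Psi> x) o\<^sub>L inv_plus (Dr (\<Psi> x))) \<le> Ls" for x
    using order_trans[OF norm_DTheta_c_le assms(1)] order_trans[OF norm_DTheta_u_le assms(2)]
      order_trans[OF norm_DTheta_s_le assms(3)] by simp_all
  ultimately show ?thesis
    unfolding mem_Gamma0_iff C1b_deriv_D1_eq[OF T] using C1b_deriv_imp_Ckb_1[OF T] by simp
qed

end

theorem theorem3p3:
  fixes n :: nat
    and Ac Aci :: "'c::banach \<Rightarrow>\<^sub>L 'c"
    and Au Aui :: "'u::banach \<Rightarrow>\<^sub>L 'u"
    and As :: "'s::banach \<Rightarrow>\<^sub>L 's"
    and g :: "('c, 'u, 's) dsum \<Rightarrow> ('c, 'u, 's) dsum"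
    and kc :: "'c \<Rightarrow> 'c"
    and Lg Lc :: real
  assumes n2: "n \<ge> 2"
    and Ac_inv: "Ac o\<^sub>L Aci = id_blinfun" "Aci o\<^sub>L Ac = id_blinfun"
    and Au_inv: "Au o\<^sub>L Aui = id_blinfun" "Aui o\<^sub>L Au = id_blinfun"
    and gap_s: "\<forall>m. 1 \<le> m \<and> m \<le> n \<longrightarrow> norm Aci ^ m * norm As < 1"
    and gap_u: "\<forall>m. 1 \<le> m \<and> m \<le> n \<longrightarrow> norm Aui * norm Ac ^ m < 1"
    and Lg_nonneg: "0 \<le> Lg" and Lc_nonneg: "0 \<le> Lc"
    and g_Cn: "Ckb n g" and g0: "g 0 = 0" and Dg0: "D_zero_at0 g" and Dg: "Dsup g \<le> Lg"
    and kc_Cn: "Ckb n kc" and kc0: "kc 0 = 0" and Dkc0: "D_zero_at0 kc" and Dkc: "Dsup kc \<le> Lc"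
    and S2: "S_cond 2 (norm Ac) (norm Aci) (norm Aui) (norm As) Lg Lc"
  shows "(\<forall>\<Lambda> \<in> Gamma0_of Ac Aci Aui As Lg Lc. bij (\<lambda>x. Ac x + pc (\<Lambda> x)))
       \<and> Gamma0_of Ac Aci Aui As Lg Lc \<noteq> {}
       \<and> (\<forall>\<Lambda> \<in> Gamma0_of Ac Aci Aui As Lg Lc.
            Theta Ac Aui As g kc \<Lambda> \<in> Gamma0_of Ac Aci Aui As Lg Lc)
       \<and> C1b_closed (Gamma0_of Ac Aci Aui As Lg Lc)"
proof -
  have "Ckb 1 g" and "Ckb 1 kc"
    using Ckb_imp_Ckb_1[OF g_Cn] Ckb_imp_Ckb_1[OF kc_Cn] n2 by simp_all
  then have g: "C1b_deriv g (D1 g)" "D1 g 0 = 0" "\<And>y. norm (D1 g y) \<le> Lg"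
    and kc: "C1b_deriv kc (D1 kc)" "D1 kc 0 = 0" "\<And>x. norm (D1 kc x) \<le> Lc"
    using Dg0 Dg Dkc0 Dkc by (auto simp: Ckb_1_imp_C1b_deriv D_zero_at0_iff Dsup_le_iff)
  note L = S_cond_2_constants[OF S2 norm_ge_zero norm_ge_zero norm_ge_zero norm_ge_zero Lg_nonneg Lc_nonneg]
  have Theta_step: "bij (\<lambda>x. Ac x + pc (\<Lambda> x)) \<and> Theta Ac Aui As g kc \<Lambda> \<in> Gamma0_of Ac Aci Aui As Lg Lc"
    if "\<Lambda> \<in> Gamma0_of Ac Aci Aui As Lg Lc" for \<Lambda>
  proof -
    interpret Theta_setting Ac Aci Aui As g "D1 g" kc "D1 kc" \<Lambda> Lg Lc "L_r (norm Ac) Lg Lc"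
        "L_u (norm Ac) (norm Aui) Lg Lc" "L_s (norm Ac) (norm Aci) (norm As) Lg Lc"
      using Ac_inv g g0 kc kc0 that Lg_nonneg Lc_nonneg L(4-6) unfolding Gamma0_of_def
      by unfold_locales auto
    show ?thesis
      using \<Phi>_bij Theta_in_Gamma0[OF L(7-9)[THEN eq_refl]] unfolding Gamma0_of_def by simp
  qed
  then show ?thesis
    using Gamma0_closed zero_mem_Gamma0[OF L(1-3)] unfolding Gamma0_of_def by blast
qed

end
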